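(* There is a universal constant $C>0$ such that the following holds. Let $G$ be a weighted finite graph, let $f_1,\ldots,f_k:V\to\mathbb{R}$ be orthonormal in $l^2(V,\mu)$, and let $F:V\to\mathbb{R}^k$, $F(v)=(f_1(v),\ldots,f_k(v))$. Then there exists a $k$-sub-bipartition $\{(V_{2i-1},V_{2i})\}_{i=1}^k$ of $V$ such that for each $1\leq i\leq k$, \[ \frac{(1-\overline{\phi}(V_{2i-1},V_{2i}))^2}{2}\leq1-\sqrt{1-(1-\overline{\phi}(V_{2i-1},V_{2i}))^2}\leq Ck^6\,\overline{\mathcal{R}}(F). \]
   Context: $G=(V,E,w)$ is a finite undirected graph without self-loops, with positive symmetric edge weights $w_{uv}$ ($w_{uv}=0$ for non-edges), degrees $d_u=\sum_vw_{uv}$ (implicitly positive), $\mu(u)=d_u$, and $(f,g)_\mu=\sum_u\mu(u)f(u)g(u)$. $|E(A,B)|:=\sum_{u\in A,v\in B}w_{uv}$, $\mathrm{vol}(A)=\sum_{u\in A}d_u$. For disjoint $V_1,V_2$ with $V_1\cup V_2\neq\emptyset$, $\overline{\phi}(V_1,V_2)=2|E(V_1,V_2)|/\mathrm{vol}(V_1\cup V_2)$. A $k$-sub-bipartition is a collection of $k$ pairs $(V_1,V_2),\ldots,(V_{2k-1},V_{2k})$ of pairwise disjoint subsets of $V$ with $V_{2i-1}\cup V_{2i}\neq\emptyset$ for each $i$. For a map $F:V\to\mathbb{R}^k$ not identically zero, \[ \overline{\mathcal{R}}(F):=\frac{\sum_{\{u,v\}\in E}\|F(u)+F(v)\|^2w_{uv}}{\sum_{u\in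 V}\|F(u)\|^2\mu(u)}, \] the numerator summing over each edge once. *)

theory Defs
  imports Complex_Main
begin

text \<open>Weighted finite graph on vertex set V (vertices are naturals), weight function w.
  Only the values of w on V x V matter.\<close>

definition deg :: "nat set \<Rightarrow> (nat \<Rightarrow> nat \<Rightarrow> real) \<Rightarrow> nat \<Rightarrow> real" where
  "deg V w u = (\<Sum>v\<in>V. w u v)"

definition weighted_graph :: "nat set \<Rightarrow> (nat \<Rightarrow> nat \<Rightarrow> real) \<Rightarrow> bool" where
  "weighted_graph V w \<longleftrightarrow> finite V
     \<and> (\<forall>u\<in>V. \<forall>v\<in>V. w u v = w v u)
     \<and> (\<forall>u\<in>V. \<forall>v\<in>V. 0 \<le> w u v)
     \<and> (\<forall>u\<in>V. w u u = 0)
     \<and> (\<forall>u\<in>V. 0 < deg V w u)"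

text \<open>Inner product of l^2(V,mu) with mu(u) = d_u.\<close>
definition ip_mu :: "nat set \<Rightarrow> (nat \<Rightarrow> nat \<Rightarrow> real) \<Rightarrow> (nat \<Rightarrow> real) \<Rightarrow> (nat \<Rightarrow> real) \<Rightarrow> real" where
  "ip_mu V w f g = (\<Sum>u\<in>V. deg V w u * f u * g u)"

definition cut_weight :: "(nat \<Rightarrow> nat \<Rightarrow> real) \<Rightarrow> nat set \<Rightarrow> nat set \<Rightarrow> real" where
  "cut_weight w A B = (\<Sum>u\<in>A. \<Sum>v\<in>B. w u v)"

definition vol :: "nat set \<Rightarrow> (nat \<Rightarrow> nat \<Rightarrow> real) \<Rightarrow> nat set \<Rightarrow> real" where
  "vol V w A = (\<Sum>u\<in>A. deg V w u)"

definition phibar :: "nat set \<Rightarrow> (nat \<Rightarrow> nat \<Rightarrow> real) \<Rightarrow> nat set \<Rightarrow> nat set \<Rightarrow> real" where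
  "phibar V w A B = 2 * cut_weight w A B / vol V w (A \<union> B)"

text \<open>F(u) = (f 0 u, ..., f (k-1) u). The numerator sums over each edge once; since w u u = 0
  and w is symmetric this is half of the sum over all ordered pairs (u,v) in V x V.\<close>
definition rayleigh_bar :: "nat set \<Rightarrow> (nat \<Rightarrow> nat \<Rightarrow> real) \<Rightarrow> nat \<Rightarrow> (nat \<Rightarrow> nat \<Rightarrow> real) \<Rightarrow> real" where
  "rayleigh_bar V w k f =
     ((1/2) * (\<Sum>u\<in>V. \<Sum>v\<in>V. (\<Sum>i<k. (f i u + f i v)\<^sup>2) * w u v))
     / (\<Sum>u\<in>V. (\<Sum>i<k. (f i u)\<^sup>2) * deg V w u)"

text \<open>k-sub-bipartition, 0-indexed: pairs (S (2i), S (2i+1)) for i < k.\<close>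
definition sub_bipartition :: "nat set \<Rightarrow> nat \<Rightarrow> (nat \<Rightarrow> nat set) \<Rightarrow> bool" where
  "sub_bipartition V k S \<longleftrightarrow>
     (\<forall>i<2*k. S i \<subseteq> V)
     \<and> (\<forall>i<2*k. \<forall>j<2*k. i \<noteq> j \<longrightarrow> S i \<inter> S j = {})
     \<and> (\<forall>i<k. S (2*i) \<union> S (2*i+1) \<noteq> {})"

end

theory Submission
  imports Defs "HOL-Library.Disjoint_Sets" "HOL-Analysis.L2_Norm" "HOL-Analysis.Convex"
begin

text \<open>
  Orthonormality makes the embedding \<open>F\<close> isotropic: \<open>\<Sum>u. d u * \<langle>F u, y\<rangle>\<^sup>2 = \<bar>y\<bar>\<^sup>2\<close>.
  Cut the directions \<open>F u / \<bar>F u\<bar>\<close> by a shifted grid of side \<open>1/(2k)\<close>, identifying each cell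
  with its antipode. Vertices of one class then have nearly parallel or antiparallel directions,
  so by isotropy every class has mass \<open>\<Sum> d u * \<bar>F u\<bar>\<^sup>2 \<le> 1 + 1/(2k)\<close>, while the total mass is k;
  hence the classes pack into k disjoint groups of mass at least 1/2. On a group, the function
  \<open>g = \<plusminus>\<bar>F u\<bar>\<close>, signed by the antipodal cell, has bipartiteness numerator
  \<open>\<Sum> w u v * \<bar>g u + g v\<bar> * (\<bar>g u\<bar> + \<bar>g v\<bar>)\<close> at most twice the energy
  \<open>\<Sum> w u v * \<bar>F u + F v\<bar> * (\<bar>F u\<bar> + \<bar>F v\<bar>)\<close> plus twice the weight of grid-separated edges, and
  averaging over shifts makes the latter \<open>O(k * sqrt k)\<close> times that energy. Cauchy-Schwarz bounds
  the energy by \<open>O(k * sqrt R)\<close>, and threshold rounding of each \<open>g\<close> yields a pair \<open>(V\<^sub>2\<^sub>i, V\<^sub>2\<^sub>i\<^sub>+\<^sub>1)\<close>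
  with \<open>1 - \<phi> = O(k\<^sup>3 * sqrt R)\<close>.
\<close>

section \<open>Averaging and layer-cake decompositions\<close>

lemma exists_le_of_weighted_sum_le:
  fixes a b \<delta> :: "'a \<Rightarrow> real"
  assumes "finite T" "T \<noteq> {}" "\<forall>t\<in>T. 0 < \<delta> t"
    and "(\<Sum>t\<in>T. \<delta> t * a t) \<le> (\<Sum>t\<in>T. \<delta> t * b t)"
  shows "\<exists>t\<in>T. a t \<le> b t"
proof (rule ccontr)
  assume "\<not> ?thesis"
  then have "\<forall>t\<in>T. \<delta> t * b t < \<delta> t * a t" using assms(3) by (simp add: not_le)
  then have "(\<Sum>t\<in>T. \<delta> t * b t) < (\<Sum>t\<in>T. \<delta> t * a t)"
    using assms(1,2) by (intro sum_strict_mono) auto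
  then show False using assms(4) by simp
qed

definition prev_level :: "real set \<Rightarrow> real \<Rightarrow> real" where
  "prev_level T t = Max (insert 0 {t'\<in>T. t' < t})"

context
  fixes T :: "real set"
  assumes fin: "finite T" and pos: "\<forall>t\<in>T. 0 < t"
begin

lemma prev_level_mem: "prev_level T t \<in> insert 0 {t'\<in>T. t' < t}"
  unfolding prev_level_def using fin by (intro Max_in) auto

lemma prev_level_less: "t \<in> T \<Longrightarrow> prev_level T t < t"
  using prev_level_mem[of t] pos by auto

lemma le_prev_level: "t' \<in> T \<Longrightarrow> t' < t \<Longrightarrow> t' \<le> prev_level T t"
  unfolding prev_level_def using fin by (intro Max_ge) auto

lemma telescoping_levels:
  assumes "a \<in> insert 0 T"
  shows "(\<Sum>t\<in>{t\<in>T. t \<le> a}. t - prev_level T t) = a"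
  using assms
proof (induction "card {t\<in>T. t \<le> a}" arbitrary: a rule: less_induct)
  case less
  show ?case
  proof (cases "a = 0")
    case True
    then have "{t\<in>T. t \<le> a} = {}" using pos by force
    then show ?thesis using True by (metis sum.empty)
  next
    case False
    then have aT: "a \<in> T" using less.prems by auto
    let ?p = "prev_level T a"
    have split: "{t\<in>T. t \<le> a} = insert a {t\<in>T. t \<le> ?p}" and nin: "a \<notin> {t\<in>T. t \<le> ?p}"
      using prev_level_less[OF aT] le_prev_level[of _ a] aT by force+
    have "card {t\<in>T. t \<le> ?p} < card {t\<in>T. t \<le> a}"
      unfolding split using nin fin by simp
    moreover have "?p \<in> insert 0 T" using prev_level_mem[of a] by auto
    ultimately have "(\<Sum>t\<in>{t\<in>T. t \<le> ?p}. t - prev_level T t) = ?p" by (rule less.hyps)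
    then show ?thesis unfolding split using nin fin by simp
  qed
qed

lemma layer_cake_sum:
  assumes "a \<in> insert 0 T"
  shows "(\<Sum>t\<in>T. (t - prev_level T t) * of_bool (t \<le> a)) = a"
proof -
  have "{t\<in>T. t \<le> a} = T \<inter> {t. t \<le> a}" by auto
  then show ?thesis using telescoping_levels[OF assms] by (simp add: fin)
qed

end

section \<open>Random shifts of a one-dimensional grid\<close>

lemma card_floor_crossings_le:
  fixes A B :: real and N :: nat
  assumes N: "0 < N" and AB: "A \<le> B"
  shows "real (card {r\<in>{..<N}. \<lfloor>(A - real r) / N\<rfloor> \<noteq> \<lfloor>(B - real r) / N\<rfloor>}) \<le> B - A + 1"
proof -
  define R where "R = {r\<in>{..<N}. \<lfloor>(A - real r) / N\<rfloor> \<noteq> \<lfloor>(B - real r) / N\<rfloor>}"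
  define \<phi> where "\<phi> r = int r + \<lfloor>(B - real r) / N\<rfloor> * int N" for r
  have Nr: "(0::real) < real N" using N by simp
  have inj: "inj_on \<phi> R"
  proof (rule inj_onI)
    fix r r' assume "r \<in> R" "r' \<in> R" "\<phi> r = \<phi> r'"
    then have "\<phi> r mod int N = \<phi> r' mod int N" "r < N" "r' < N" unfolding R_def by auto
    then show "r = r'" unfolding \<phi>_def by simp
  qed
  \<comment> \<open>A crossing shift r gives the integer \<open>\<phi> r\<close> in (A, B], since \<open>\<phi> r - r\<close> is a multiple of N
      lying in the crossed interval \<open>(A - r, B - r]\<close>.\<close>
  have img: "\<phi> ` R \<subseteq> {\<lfloor>A\<rfloor>+1..\<lfloor>B\<rfloor>}"
  proof
    fix z assume "z \<in> \<phi> ` R"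
    then obtain r where rR: "r \<in> R" and z: "z = \<phi> r" by auto
    define n where "n = \<lfloor>(B - real r) / N\<rfloor>"
    define m where "m = \<lfloor>(A - real r) / N\<rfloor>"
    have "m \<le> n" unfolding n_def m_def
      by (intro floor_mono divide_right_mono) (use AB in auto)
    moreover have "n \<noteq> m" using rR unfolding R_def n_def m_def by auto
    moreover have "(A - real r) / N < real_of_int m + 1" unfolding m_def by linarith
    ultimately have "(A - real r) / N < real_of_int n" by linarith
    then have lo: "A - real r < real_of_int n * N" using Nr by (simp add: divide_less_eq)
    have "real_of_int n \<le> (B - real r) / N" unfolding n_def by linarith
    then have hi: "real_of_int n * N \<le> B - real r" using Nr by (simp add: le_divide_eq)
    have zr: "real_of_int z = real r + real_of_int n * N" unfolding z \<phi>_def n_def by simp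
    have "\<lfloor>A\<rfloor> < z" using lo zr by linarith
    moreover have "z \<le> \<lfloor>B\<rfloor>" using hi zr by linarith
    ultimately show "z \<in> {\<lfloor>A\<rfloor>+1..\<lfloor>B\<rfloor>}" by auto
  qed
  have "card R \<le> card {\<lfloor>A\<rfloor>+1..\<lfloor>B\<rfloor>}"
    using card_image[OF inj] card_mono[OF _ img] by simp
  then have "real (card R) \<le> real_of_int (\<lfloor>B\<rfloor> - \<lfloor>A\<rfloor>)"
    using floor_mono[OF AB] by simp
  also have "\<dots> \<le> B - A + 1" by linarith
  finally show ?thesis unfolding R_def .
qed

lemma card_shifted_floor_crossings_le:
  fixes a b s :: real and N :: nat
  assumes N: "0 < N" and s: "0 < s"
  shows "real (card {r\<in>{..<N}. \<lfloor>(a - real r * s / N) / s\<rfloor> \<noteq> \<lfloor>(b - real r * s / N) / s\<rfloor>})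
    \<le> real N * \<bar>a - b\<bar> / s + 1"
proof -
  have Nr: "(0::real) < real N" using N by simp
  have rescale: "(y - real r * s / N) / s = (y * N / s - real r) / N" for y r
    using Nr s by (simp add: field_simps)
  have "real (card {r\<in>{..<N}. \<lfloor>(a * N / s - real r) / N\<rfloor> \<noteq> \<lfloor>(b * N / s - real r) / N\<rfloor>})
      \<le> \<bar>b * N / s - a * N / s\<bar> + 1"
  proof (cases "a \<le> b")
    case True
    then have "a * N / s \<le> b * N / s" using Nr s by (simp add: divide_right_mono mult_right_mono)
    then show ?thesis using card_floor_crossings_le[OF N] by fastforce
  next
    case False
    then have "b * N / s \<le> a * N / s" using Nr s by (simp add: divide_right_mono mult_right_mono)
    then show ?thesis using card_floor_crossings_le[OF N, of "b * N / s" "a * N / s"]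
      by (fastforce simp: eq_commute[of "\<lfloor>(b * N / s - real _) / N\<rfloor>"])
  qed
  also have "\<bar>b * N / s - a * N / s\<bar> = real N * \<bar>a - b\<bar> / s"
    using Nr s by (simp add: abs_minus_commute flip: diff_divide_distrib left_diff_distrib)
      (simp add: abs_mult mult.commute)
  finally show ?thesis unfolding rescale .
qed

lemma exists_shift_few_crossings:
  fixes a b \<omega> :: "'i \<Rightarrow> real" and s :: real
  assumes fI: "finite I" and \<omega>: "\<forall>p\<in>I. 0 \<le> \<omega> p" and s: "0 < s"
  shows "\<exists>\<sigma>. (\<Sum>p\<in>I. \<omega> p * of_bool (\<lfloor>(a p - \<sigma>) / s\<rfloor> \<noteq> \<lfloor>(b p - \<sigma>) / s\<rfloor>))
            \<le> 2 / s * (\<Sum>p\<in>I. \<omega> p * \<bar>a p - b p\<bar>)"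
proof -
  define J where "J = {p\<in>I. a p \<noteq> b p}"
  have fJ: "finite J" unfolding J_def using fI by auto
  \<comment> \<open>Average over the N shifts \<open>r * s / N\<close>, with N so large that every nonzero gap \<open>\<bar>a p - b p\<bar>\<close>
      is at least \<open>s / N\<close>; this absorbs the additive 1 in the crossing count.\<close>
  obtain N :: nat where N: "0 < N" and gap: "\<forall>p\<in>J. s \<le> real N * \<bar>a p - b p\<bar>"
  proof (cases "J = {}")
    case False
    define \<delta> where "\<delta> = Min ((\<lambda>p. \<bar>a p - b p\<bar>) ` J)"
    have \<delta>: "0 < \<delta>" unfolding \<delta>_def using fJ False by (subst Min_gr_iff) (auto simp: J_def)
    have "s \<le> real (nat \<lceil>s / \<delta>\<rceil> + 1) * \<bar>a p - b p\<bar>" if "p \<in> J" for p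
    proof -
      have "\<delta> \<le> \<bar>a p - b p\<bar>" unfolding \<delta>_def using fJ that by (intro Min_le) auto
      moreover have "s / \<delta> \<le> real (nat \<lceil>s / \<delta>\<rceil> + 1)" by linarith
      ultimately have "s / \<delta> * \<delta> \<le> real (nat \<lceil>s / \<delta>\<rceil> + 1) * \<bar>a p - b p\<bar>"
        using \<delta> by (intro mult_mono) auto
      then show ?thesis using \<delta> by simp
    qed
    then show ?thesis by (intro that[of "nat \<lceil>s / \<delta>\<rceil> + 1"]) auto
  qed (use that[of 1] in auto)
  define cross where "cross r p = (of_bool (\<lfloor>(a p - real r * s / N) / s\<rfloor> \<noteq> \<lfloor>(b p - real r * s / N) / s\<rfloor>) :: real)"
    for r p
  have crossings: "(\<Sum>r<N. cross r p) \<le> 2 * real N * \<bar>a p - b p\<bar> / s" if "p \<in> I" for p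
  proof (cases "a p = b p")
    case False
    then have "1 \<le> real N * \<bar>a p - b p\<bar> / s" using gap that s by (simp add: J_def)
    moreover have "(\<Sum>r<N. cross r p)
        = real (card {r\<in>{..<N}. \<lfloor>(a p - real r * s / N) / s\<rfloor> \<noteq> \<lfloor>(b p - real r * s / N) / s\<rfloor>})"
      unfolding cross_def by (simp add: Collect_conj_eq lessThan_def)
    ultimately show ?thesis using card_shifted_floor_crossings_le[OF N s, of "a p" "b p"] by argo
  qed (simp add: cross_def)
  have "(\<Sum>r<N. 1 * (\<Sum>p\<in>I. \<omega> p * cross r p)) = (\<Sum>p\<in>I. \<omega> p * (\<Sum>r<N. cross r p))"
    by (simp add: sum_distrib_left) (rule sum.swap)
  also have "\<dots> \<le> (\<Sum>p\<in>I. \<omega> p * (2 * real N * \<bar>a p - b p\<bar> / s))"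
    using crossings \<omega> by (intro sum_mono mult_left_mono) auto
  also have "\<dots> = (\<Sum>r<N. 1 * (2 / s * (\<Sum>p\<in>I. \<omega> p * \<bar>a p - b p\<bar>)))"
    by (simp add: sum_distrib_left algebra_simps)
  finally have "\<exists>r\<in>{..<N}. (\<Sum>p\<in>I. \<omega> p * cross r p) \<le> 2 / s * (\<Sum>p\<in>I. \<omega> p * \<bar>a p - b p\<bar>)"
    using N by (intro exists_le_of_weighted_sum_le[where \<delta>="\<lambda>_. 1"]) auto
  then show ?thesis unfolding cross_def by blast
qed

section \<open>Packing weights into disjoint heavy groups\<close>

lemma exists_subset_sum_between:
  fixes W :: "'a \<Rightarrow> real"
  assumes "finite X" "\<forall>x\<in>X. 0 \<le> W x \<and> W x \<le> M" "1 \<le> M" "1/2 \<le> sum W X"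
  shows "\<exists>Y\<subseteq>X. 1/2 \<le> sum W Y \<and> sum W Y \<le> M"
  using assms
proof (induction X rule: finite_induct)
  case (insert a X)
  show ?case
  proof (cases "1/2 \<le> sum W X")
    case True
    then show ?thesis using insert by blast
  next
    case False
    then show ?thesis using insert
      by (cases "1/2 \<le> W a") (auto intro: exI[of _ "{a}"] exI[of _ "insert a X"])
  qed
qed simp

lemma exists_disjoint_heavy_subsets:
  fixes W :: "'a \<Rightarrow> real"
  assumes "finite X" "\<forall>x\<in>X. 0 \<le> W x \<and> W x \<le> M" "1 \<le> M" "real n * M + 1/2 \<le> sum W X"
  shows "\<exists>Y. (\<forall>i\<le>n. Y i \<subseteq> X \<and> 1/2 \<le> sum W (Y i)) \<and> disjoint_family_on Y {..n}"
  using assms(1,2,4)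
proof (induction n arbitrary: X)
  case 0
  then obtain Y0 where "Y0 \<subseteq> X" "1/2 \<le> sum W Y0"
    using exists_subset_sum_between[of X W M] assms(3) by auto
  then show ?case by (intro exI[of _ "\<lambda>_. Y0"]) (auto simp: disjoint_family_on_def)
next
  case (Suc n)
  have "0 \<le> real (Suc n) * M" using assms(3) by simp
  then have "1/2 \<le> sum W X" using Suc.prems(3) by linarith
  then obtain Y0 where Y0: "Y0 \<subseteq> X" "1/2 \<le> sum W Y0" "sum W Y0 \<le> M"
    using exists_subset_sum_between[OF Suc.prems(1,2) assms(3)] by auto
  have "sum W X = sum W Y0 + sum W (X - Y0)"
    using sum.subset_diff[OF Y0(1) Suc.prems(1)] by (simp add: add.commute)
  then have "real n * M + 1/2 \<le> sum W (X - Y0)" using Suc.prems(3) Y0(3) by (simp add: algebra_simps)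
  then obtain Y where Y: "\<forall>i\<le>n. Y i \<subseteq> X - Y0 \<and> 1/2 \<le> sum W (Y i)" "disjoint_family_on Y {..n}"
    using Suc.IH[of "X - Y0"] Suc.prems(1,2) by auto
  have "\<forall>i\<le>Suc n. (Y(Suc n := Y0)) i \<subseteq> X \<and> 1/2 \<le> sum W ((Y(Suc n := Y0)) i)"
    using Y(1) Y0 by (auto simp: le_Suc_eq)
  moreover have "disjoint_family_on (Y(Suc n := Y0)) {..Suc n}"
    using Y unfolding disjoint_family_on_def by (auto simp: le_Suc_eq) blast+
  ultimately show ?case by blast
qed

definition vnorm :: "nat \<Rightarrow> (nat \<Rightarrow> real) \<Rightarrow> real" where
  "vnorm k a = L2_set a {..<k}"

definition vinner :: "nat \<Rightarrow> (nat \<Rightarrow> real) \<Rightarrow> (nat \<Rightarrow> real) \<Rightarrow> real" where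
  "vinner k a b = (\<Sum>i<k. a i * b i)"

lemma vnorm_nonneg: "0 \<le> vnorm k a"
  unfolding vnorm_def by simp

lemma vnorm_power2: "(vnorm k a)\<^sup>2 = (\<Sum>i<k. (a i)\<^sup>2)"
  unfolding vnorm_def L2_set_def by (simp add: sum_nonneg)

lemma vnorm_add_le: "vnorm k (\<lambda>i. a i + b i) \<le> vnorm k a + vnorm k b"
  unfolding vnorm_def by (rule L2_set_triangle_ineq)

lemma vnorm_uminus: "vnorm k (\<lambda>i. - a i) = vnorm k a"
  unfolding vnorm_def L2_set_def by simp

lemma vnorm_scale: "vnorm k (\<lambda>i. r * a i) = \<bar>r\<bar> * vnorm k a"
  unfolding vnorm_def using L2_set_right_distrib[of "\<bar>r\<bar>" a "{..<k}"]
  unfolding L2_set_def by (simp add: power_mult_distrib)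

lemma vnorm_add_power2: "(vnorm k (\<lambda>i. a i + b i))\<^sup>2 = (vnorm k a)\<^sup>2 + (vnorm k b)\<^sup>2 + 2 * vinner k a b"
  unfolding vnorm_power2 vinner_def by (simp add: power2_sum sum.distrib sum_distrib_left mult.assoc)

lemma vnorm_diff_power2: "(vnorm k (\<lambda>i. a i - b i))\<^sup>2 = (vnorm k a)\<^sup>2 + (vnorm k b)\<^sup>2 - 2 * vinner k a b"
  unfolding vnorm_power2 vinner_def
  by (simp add: power2_diff sum.distrib sum_subtractf sum_distrib_left mult.assoc)

lemma abs_vnorm_diff_le: "\<bar>vnorm k a - vnorm k b\<bar> \<le> vnorm k (\<lambda>i. a i + b i)"
proof -
  have "vnorm k a \<le> vnorm k (\<lambda>i. a i + b i) + vnorm k b"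
    using vnorm_add_le[of k "\<lambda>i. a i + b i" "\<lambda>i. - b i"] by (simp add: vnorm_uminus)
  moreover have "vnorm k b \<le> vnorm k (\<lambda>i. a i + b i) + vnorm k a"
    using vnorm_add_le[of k "\<lambda>i. a i + b i" "\<lambda>i. - a i"] by (simp add: vnorm_uminus)
  ultimately show ?thesis by linarith
qed

lemma vnorm_normalize: "vnorm k a \<noteq> 0 \<Longrightarrow> vnorm k (\<lambda>i. a i / vnorm k a) = 1"
  using vnorm_scale[of k "1 / vnorm k a" a] vnorm_nonneg[of k a] by simp

lemma vnorm_normalized_sum_le:
  assumes a: "vnorm k a \<noteq> 0" and b: "vnorm k b \<noteq> 0"
  shows "vnorm k (\<lambda>i. a i / vnorm k a + b i / vnorm k b) * vnorm k b \<le> 2 * vnorm k (\<lambda>i. a i + b i)"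
proof -
  have "vnorm k (\<lambda>i. a i / vnorm k a + b i / vnorm k b) * vnorm k b
      = vnorm k (\<lambda>i. vnorm k b * (a i / vnorm k a + b i / vnorm k b))"
    using vnorm_scale[of k "vnorm k b" "\<lambda>i. a i / vnorm k a + b i / vnorm k b"] vnorm_nonneg[of k b]
    by (simp add: mult.commute)
  also have "\<dots> = vnorm k (\<lambda>i. (vnorm k b - vnorm k a) * (a i / vnorm k a) + (a i + b i))"
    using a b by (intro arg_cong[where f="vnorm k"] ext) (simp add: field_simps)
  also have "\<dots> \<le> vnorm k (\<lambda>i. (vnorm k b - vnorm k a) * (a i / vnorm k a)) + vnorm k (\<lambda>i. a i + b i)"
    by (rule vnorm_add_le)
  also have "\<dots> = \<bar>vnorm k b - vnorm k a\<bar> + vnorm k (\<lambda>i. a i + b i)"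
    using vnorm_scale[of k "vnorm k b - vnorm k a" "\<lambda>i. a i / vnorm k a"] vnorm_normalize[OF a] by simp
  also have "\<dots> \<le> 2 * vnorm k (\<lambda>i. a i + b i)"
    using abs_vnorm_diff_le[of k b a] by (simp add: add.commute abs_minus_commute)
  finally show ?thesis .
qed

lemma sum_abs_le_sqrt_vnorm: "(\<Sum>j<k. \<bar>a j\<bar>) \<le> sqrt (real k) * vnorm k a"
  using L2_set_mult_ineq[of "\<lambda>_. 1" a "{..<k}"] unfolding vnorm_def L2_set_constant by simp

lemma weighted_Cauchy_Schwarz:
  fixes w a b :: "'i \<Rightarrow> real"
  assumes "\<forall>p\<in>I. 0 \<le> w p"
  shows "(\<Sum>p\<in>I. w p * a p * b p)\<^sup>2 \<le> (\<Sum>p\<in>I. w p * (a p)\<^sup>2) * (\<Sum>p\<in>I. w p * (b p)\<^sup>2)"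
  using Cauchy_Schwarz_ineq_sum[of "\<lambda>p. sqrt (w p) * a p" "\<lambda>p. sqrt (w p) * b p" I] assms
  by (simp add: power_mult_distrib mult_ac flip: real_sqrt_mult cong: sum.cong)

lemma one_minus_sqrt_bounds:
  fixes b :: real
  assumes "0 \<le> b" "b \<le> 1"
  shows "b\<^sup>2 / 2 \<le> 1 - sqrt (1 - b\<^sup>2)" "1 - sqrt (1 - b\<^sup>2) \<le> b\<^sup>2"
proof -
  have b2: "0 \<le> b\<^sup>2" "b\<^sup>2 \<le> 1" using assms by (auto simp: power_le_one)
  have "(1 - b\<^sup>2 / 2)\<^sup>2 = 1 - b\<^sup>2 + (b\<^sup>2)\<^sup>2 / 4"
    by (simp add: power2_eq_square algebra_simps)
  then have "sqrt (1 - b\<^sup>2) \<le> 1 - b\<^sup>2 / 2"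
    using b2 by (intro real_le_lsqrt) auto
  then show "b\<^sup>2 / 2 \<le> 1 - sqrt (1 - b\<^sup>2)" by simp
  have "1 - b\<^sup>2 \<le> sqrt (1 - b\<^sup>2)"
    using b2 by (intro real_le_rsqrt) (simp add: power2_eq_square mult_left_le_one_le)
  then show "1 - sqrt (1 - b\<^sup>2) \<le> b\<^sup>2" by simp
qed

lemma square_sum_le_twice_sum_squares: "((a::real) + b)\<^sup>2 \<le> 2 * (a\<^sup>2 + b\<^sup>2)"
  using zero_le_power2[of "a - b"] by (simp add: power2_eq_square algebra_simps)

lemma abs_sum_mult_sum_abs_le:
  fixes a b A B :: real
  assumes "\<bar>a\<bar> \<le> A" "\<bar>b\<bar> \<le> B"
  shows "\<bar>a + b\<bar> * (\<bar>a\<bar> + \<bar>b\<bar>) \<le> 2 * (A\<^sup>2 + B\<^sup>2)"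
proof -
  have "\<bar>a + b\<bar> * (\<bar>a\<bar> + \<bar>b\<bar>) \<le> (A + B) * (A + B)"
    using assms abs_triangle_ineq[of a b] by (intro mult_mono) auto
  also have "\<dots> \<le> 2 * (A\<^sup>2 + B\<^sup>2)"
    using square_sum_le_twice_sum_squares[of A B] by (simp add: power2_eq_square)
  finally show ?thesis .
qed

definition cross_level :: "real \<Rightarrow> real \<Rightarrow> real" where
  "cross_level a b = (if 0 < a \<and> b < 0 then min (a\<^sup>2) (b\<^sup>2) else 0)"

lemma sum_squares_minus_cross_levels_le:
  fixes a b :: real
  shows "a\<^sup>2 + b\<^sup>2 - 2 * cross_level a b - 2 * cross_level b a \<le> \<bar>a + b\<bar> * (\<bar>a\<bar> + \<bar>b\<bar>)"
proof -
  consider "0 < a \<and> b < 0" | "0 < b \<and> a < 0" | "0 \<le> a \<and> 0 \<le> b" | "a \<le> 0 \<and> b \<le> 0"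
    by linarith
  then show ?thesis
  proof cases
    case 1
    then have "\<bar>a + b\<bar> * (\<bar>a\<bar> + \<bar>b\<bar>) = \<bar>(a + b) * (a - b)\<bar>" by (simp add: abs_mult)
    also have "\<dots> = \<bar>a\<^sup>2 - b\<^sup>2\<bar>" by (simp add: power2_eq_square algebra_simps)
    finally show ?thesis using 1 by (auto simp: cross_level_def min_def)
  next
    case 2
    then have "\<bar>a + b\<bar> * (\<bar>a\<bar> + \<bar>b\<bar>) = \<bar>(a + b) * (b - a)\<bar>" by (simp add: abs_mult)
    also have "\<dots> = \<bar>b\<^sup>2 - a\<^sup>2\<bar>" by (simp add: power2_eq_square algebra_simps)
    finally show ?thesis using 2 by (auto simp: cross_level_def min_def)
  next
    case 3
    then have "\<bar>a + b\<bar> * (\<bar>a\<bar> + \<bar>b\<bar>) = (a + b) * (a + b)" by simp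
    then show ?thesis using 3 by (simp add: cross_level_def power2_eq_square algebra_simps)
  next
    case 4
    then have "\<bar>a + b\<bar> * (\<bar>a\<bar> + \<bar>b\<bar>) = (a + b) * (a + b)" by (simp add: algebra_simps)
    then show ?thesis using 4 by (simp add: cross_level_def power2_eq_square algebra_simps mult_nonpos_nonpos)
  qed
qed

section \<open>Weighted graphs and threshold rounding\<close>

locale finite_weighted_graph =
  fixes V :: "nat set" and w :: "nat \<Rightarrow> nat \<Rightarrow> real"
  assumes weighted_graph: "weighted_graph V w"
begin

lemma finite_V: "finite V"
  and w_sym: "u \<in> V \<Longrightarrow> v \<in> V \<Longrightarrow> w u v = w v u"
  and w_nonneg: "u \<in> V \<Longrightarrow> v \<in> V \<Longrightarrow> 0 \<le> w u v"
  and deg_pos: "u \<in> V \<Longrightarrow> 0 < deg V w u"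
  using weighted_graph unfolding weighted_graph_def by auto

lemma double_sum_swap: "(\<Sum>u\<in>V. \<Sum>v\<in>V. w u v * h u v) = (\<Sum>u\<in>V. \<Sum>v\<in>V. w u v * h v u)"
  using w_sym by (subst sum.swap) (intro sum.cong refl, simp)

lemma sum_over_subset:
  fixes h :: "nat \<Rightarrow> real"
  shows "S \<subseteq> V \<Longrightarrow> (\<Sum>u\<in>V. h u * of_bool (u \<in> S)) = (\<Sum>u\<in>S. h u)"
proof -
  assume "S \<subseteq> V"
  then have "{u \<in> V. u \<in> S} = S" by auto
  then show ?thesis using finite_V by (simp add: Int_def)
qed

lemma vol_eq_double_sum: "S \<subseteq> V \<Longrightarrow> vol V w S = (\<Sum>u\<in>V. \<Sum>v\<in>V. w u v * of_bool (u \<in> S))"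
  unfolding vol_def deg_def by (simp add: sum_over_subset flip: sum_distrib_right)

lemma cut_weight_eq_double_sum:
  assumes "A \<subseteq> V" "B \<subseteq> V"
  shows "cut_weight w A B = (\<Sum>u\<in>V. \<Sum>v\<in>V. w u v * of_bool (u \<in> A \<and> v \<in> B))"
proof -
  have "cut_weight w A B = (\<Sum>u\<in>V. (\<Sum>v\<in>V. w u v * of_bool (v \<in> B)) * of_bool (u \<in> A))"
    unfolding cut_weight_def using assms by (simp add: sum_over_subset)
  then show ?thesis by (simp add: sum_distrib_left of_bool_conj mult_ac)
qed

lemma cut_weight_sym: "A \<subseteq> V \<Longrightarrow> B \<subseteq> V \<Longrightarrow> cut_weight w A B = cut_weight w B A"
  using double_sum_swap[of "\<lambda>u v. of_bool (u \<in> A \<and> v \<in> B)"]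
  by (simp add: cut_weight_eq_double_sum conj_commute)

lemma double_sum_eq_sum_deg: "(\<Sum>u\<in>V. \<Sum>v\<in>V. w u v * h u) = (\<Sum>u\<in>V. deg V w u * h u)"
  unfolding deg_def by (simp add: sum_distrib_right)

lemma double_sum_Cauchy_Schwarz:
  "(\<Sum>u\<in>V. \<Sum>v\<in>V. w u v * a u v * b u v)\<^sup>2
    \<le> (\<Sum>u\<in>V. \<Sum>v\<in>V. w u v * (a u v)\<^sup>2) * (\<Sum>u\<in>V. \<Sum>v\<in>V. w u v * (b u v)\<^sup>2)"
  using weighted_Cauchy_Schwarz[of "V \<times> V" "case_prod w" "case_prod a" "case_prod b"] w_nonneg
  by (simp add: sum.cartesian_product case_prod_beta)

lemma vol_minus_twice_cut_eq_double_sum: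
  assumes "A \<subseteq> V" "B \<subseteq> V"
  shows "vol V w (A \<union> B) - 2 * cut_weight w A B
    = (\<Sum>u\<in>V. \<Sum>v\<in>V. w u v * (of_bool (u \<in> A \<union> B) - of_bool (u \<in> A \<and> v \<in> B) - of_bool (u \<in> B \<and> v \<in> A)))"
proof -
  have "2 * cut_weight w A B = cut_weight w A B + cut_weight w B A"
    using cut_weight_sym[OF assms] by simp
  then show ?thesis using assms
    by (simp add: vol_eq_double_sum cut_weight_eq_double_sum sum_subtractf sum.distrib algebra_simps)
qed

lemma vol_pos: "S \<subseteq> V \<Longrightarrow> S \<noteq> {} \<Longrightarrow> 0 < vol V w S"
  unfolding vol_def using finite_V deg_pos
  by (metis all_not_in_conv finite_subset less_imp_le subset_iff sum_pos2)

lemma phibar_bounds: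
  assumes "A \<subseteq> V" "B \<subseteq> V" "A \<inter> B = {}" "A \<union> B \<noteq> {}"
  shows "0 \<le> phibar V w A B" "phibar V w A B \<le> 1"
proof -
  have vol: "0 < vol V w (A \<union> B)" using assms by (intro vol_pos) auto
  have "0 \<le> cut_weight w A B" unfolding cut_weight_def using assms w_nonneg by (intro sum_nonneg) (auto simp: subset_iff)
  then show "0 \<le> phibar V w A B" unfolding phibar_def using vol by simp
  have "cut_weight w A B \<le> vol V w A" "cut_weight w B A \<le> vol V w B"
    unfolding cut_weight_def vol_def deg_def using assms w_nonneg finite_V
    by (intro sum_mono sum_mono2; auto simp: subset_iff)+
  moreover have "vol V w (A \<union> B) = vol V w A + vol V w B"
    unfolding vol_def using assms finite_subset[OF _ finite_V] by (intro sum.union_disjoint) auto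
  ultimately show "phibar V w A B \<le> 1"
    unfolding phibar_def using vol cut_weight_sym[OF assms(1,2)] by simp
qed

lemma one_minus_phibar_le:
  assumes "A \<union> B \<subseteq> V" "A \<union> B \<noteq> {}"
    and "vol V w (A \<union> B) - 2 * cut_weight w A B \<le> r * vol V w (A \<union> B)"
  shows "1 - phibar V w A B \<le> r"
proof -
  have "0 < vol V w (A \<union> B)" using assms(1,2) by (rule vol_pos)
  then show ?thesis unfolding phibar_def using assms(3) by (simp add: field_simps)
qed

definition levels :: "(nat \<Rightarrow> real) \<Rightarrow> real set" where
  "levels g = (\<lambda>u. (g u)\<^sup>2) ` {u\<in>V. g u \<noteq> 0}"

definition level_gap :: "(nat \<Rightarrow> real) \<Rightarrow> real \<Rightarrow> real" where
  "level_gap g t = t - prev_level (levels g) t"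

definition pos_level :: "(nat \<Rightarrow> real) \<Rightarrow> real \<Rightarrow> nat set" where
  "pos_level g t = {u\<in>V. 0 < g u \<and> t \<le> (g u)\<^sup>2}"

definition neg_level :: "(nat \<Rightarrow> real) \<Rightarrow> real \<Rightarrow> nat set" where
  "neg_level g t = {u\<in>V. g u < 0 \<and> t \<le> (g u)\<^sup>2}"

lemma finite_levels: "finite (levels g)"
  unfolding levels_def using finite_V by simp

lemma levels_pos: "\<forall>t\<in>levels g. 0 < t"
  unfolding levels_def by auto

lemma level_gap_pos: "t \<in> levels g \<Longrightarrow> 0 < level_gap g t"
  unfolding level_gap_def using prev_level_less[OF finite_levels levels_pos] by simp

lemma layer_sum_level_member:
  assumes "u \<in> V"
  shows "(\<Sum>t\<in>levels g. level_gap g t * of_bool (u \<in> pos_level g t \<union> neg_level g t)) = (g u)\<^sup>2"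
proof (cases "g u = 0")
  case False
  then have "(g u)\<^sup>2 \<in> insert 0 (levels g)" and
    "u \<in> pos_level g t \<union> neg_level g t \<longleftrightarrow> t \<le> (g u)\<^sup>2" for t
    unfolding levels_def pos_level_def neg_level_def using assms by auto
  then show ?thesis
    unfolding level_gap_def using layer_cake_sum[OF finite_levels levels_pos] by simp
qed (simp add: pos_level_def neg_level_def)

lemma layer_sum_level_cross:
  assumes "u \<in> V" "v \<in> V"
  shows "(\<Sum>t\<in>levels g. level_gap g t * of_bool (u \<in> pos_level g t \<and> v \<in> neg_level g t))
    = cross_level (g u) (g v)"
proof (cases "0 < g u \<and> g v < 0")
  case True
  let ?m = "min ((g u)\<^sup>2) ((g v)\<^sup>2)"
  have "u \<in> pos_level g t \<and> v \<in> neg_level g t \<longleftrightarrow> t \<le> ?m" for t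
    unfolding pos_level_def neg_level_def using assms True by auto
  then have "(\<Sum>t\<in>levels g. level_gap g t * of_bool (u \<in> pos_level g t \<and> v \<in> neg_level g t))
      = (\<Sum>t\<in>levels g. (t - prev_level (levels g) t) * of_bool (t \<le> ?m))"
    unfolding level_gap_def by presburger
  also have "\<dots> = ?m"
    using True assms by (intro layer_cake_sum[OF finite_levels levels_pos]) (auto simp: levels_def min_def)
  finally show ?thesis using True by (simp add: cross_level_def)
qed (auto simp: pos_level_def neg_level_def cross_level_def)

lemma layer_sum_vol:
  "(\<Sum>t\<in>levels g. level_gap g t * vol V w (pos_level g t \<union> neg_level g t)) = (\<Sum>u\<in>V. deg V w u * (g u)\<^sup>2)"
proof -
  have "(\<Sum>t\<in>levels g. level_gap g t * vol V w (pos_level g t \<union> neg_level g t))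
      = (\<Sum>t\<in>levels g. \<Sum>u\<in>V. deg V w u * (level_gap g t * of_bool (u \<in> pos_level g t \<union> neg_level g t)))"
  proof (intro sum.cong refl)
    fix t
    have sub: "pos_level g t \<union> neg_level g t \<subseteq> V" unfolding pos_level_def neg_level_def by auto
    show "level_gap g t * vol V w (pos_level g t \<union> neg_level g t)
      = (\<Sum>u\<in>V. deg V w u * (level_gap g t * of_bool (u \<in> pos_level g t \<union> neg_level g t)))"
      unfolding vol_def sum_over_subset[OF sub, symmetric] by (simp add: sum_distrib_left mult_ac)
  qed
  also have "\<dots> = (\<Sum>u\<in>V. deg V w u * (g u)\<^sup>2)"
    by (subst sum.swap) (simp add: layer_sum_level_member del: Un_iff flip: sum_distrib_left)
  finally show ?thesis .
qed

lemma layer_sum_vol_minus_cut: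
  "(\<Sum>t\<in>levels g. level_gap g t * (vol V w (pos_level g t \<union> neg_level g t)
        - 2 * cut_weight w (pos_level g t) (neg_level g t)))
    = (\<Sum>u\<in>V. \<Sum>v\<in>V. w u v * ((g u)\<^sup>2 - cross_level (g u) (g v) - cross_level (g v) (g u)))"
proof -
  define P where "P t u = (of_bool (u \<in> pos_level g t \<union> neg_level g t) :: real)" for t u
  define X where "X t u v = (of_bool (u \<in> pos_level g t \<and> v \<in> neg_level g t) :: real)" for t u v
  have sub: "pos_level g t \<subseteq> V" "neg_level g t \<subseteq> V" for t
    unfolding pos_level_def neg_level_def by auto
  have "(\<Sum>t\<in>levels g. level_gap g t * (vol V w (pos_level g t \<union> neg_level g t)
        - 2 * cut_weight w (pos_level g t) (neg_level g t)))
      = (\<Sum>t\<in>levels g. \<Sum>u\<in>V. \<Sum>v\<in>V. w u v *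
          (level_gap g t * P t u - level_gap g t * X t u v - level_gap g t * X t v u))"
    unfolding vol_minus_twice_cut_eq_double_sum[OF sub] P_def X_def
    by (simp add: sum_distrib_left algebra_simps conj_commute)
  also have "\<dots> = (\<Sum>u\<in>V. \<Sum>v\<in>V. w u v * ((\<Sum>t\<in>levels g. level_gap g t * P t u)
        - (\<Sum>t\<in>levels g. level_gap g t * X t u v) - (\<Sum>t\<in>levels g. level_gap g t * X t v u)))"
    by (subst sum.swap, intro sum.cong refl, subst sum.swap)
      (simp add: sum_subtractf sum_distrib_left right_diff_distrib)
  also have "\<dots> = (\<Sum>u\<in>V. \<Sum>v\<in>V. w u v * ((g u)\<^sup>2 - cross_level (g u) (g v) - cross_level (g v) (g u)))"
    unfolding P_def X_def by (intro sum.cong refl) (simp add: layer_sum_level_member layer_sum_level_cross del: Un_iff)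
  finally show ?thesis .
qed

lemma double_sum_cross_levels_le:
  "(\<Sum>u\<in>V. \<Sum>v\<in>V. w u v * ((g u)\<^sup>2 - cross_level (g u) (g v) - cross_level (g v) (g u)))
    \<le> (\<Sum>u\<in>V. \<Sum>v\<in>V. w u v * (\<bar>g u + g v\<bar> * (\<bar>g u\<bar> + \<bar>g v\<bar>))) / 2"
proof -
  let ?L = "\<Sum>u\<in>V. \<Sum>v\<in>V. w u v * ((g u)\<^sup>2 - cross_level (g u) (g v) - cross_level (g v) (g u))"
  have "2 * ?L = ?L + (\<Sum>u\<in>V. \<Sum>v\<in>V. w u v * ((g v)\<^sup>2 - cross_level (g v) (g u) - cross_level (g u) (g v)))"
    using double_sum_swap[of "\<lambda>u v. (g u)\<^sup>2 - cross_level (g u) (g v) - cross_level (g v) (g u)"] by simp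
  also have "\<dots> = (\<Sum>u\<in>V. \<Sum>v\<in>V. w u v *
      ((g u)\<^sup>2 + (g v)\<^sup>2 - 2 * cross_level (g u) (g v) - 2 * cross_level (g v) (g u)))"
    by (simp add: sum.distrib[symmetric] algebra_simps)
  also have "\<dots> \<le> (\<Sum>u\<in>V. \<Sum>v\<in>V. w u v * (\<bar>g u + g v\<bar> * (\<bar>g u\<bar> + \<bar>g v\<bar>)))"
    using w_nonneg sum_squares_minus_cross_levels_le by (intro sum_mono mult_left_mono) auto
  finally show ?thesis by simp
qed

lemma threshold_rounding:
  assumes D: "0 < (\<Sum>u\<in>V. deg V w u * (g u)\<^sup>2)"
  shows "\<exists>A B. A \<subseteq> {u\<in>V. 0 < g u} \<and> B \<subseteq> {u\<in>V. g u < 0} \<and> A \<union> B \<noteq> {} \<and>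
     1 - phibar V w A B
       \<le> (\<Sum>u\<in>V. \<Sum>v\<in>V. w u v * (\<bar>g u + g v\<bar> * (\<bar>g u\<bar> + \<bar>g v\<bar>))) / (2 * (\<Sum>u\<in>V. deg V w u * (g u)\<^sup>2))"
    (is "\<exists>A B. _ \<and> _ \<and> _ \<and> _ \<le> ?r")
proof -
  have ne: "levels g \<noteq> {}"
  proof
    assume "levels g = {}"
    then have "\<forall>u\<in>V. g u = 0" unfolding levels_def by auto
    then show False using D by simp
  qed
  have "(\<Sum>t\<in>levels g. level_gap g t * (vol V w (pos_level g t \<union> neg_level g t)
        - 2 * cut_weight w (pos_level g t) (neg_level g t)))
      \<le> (\<Sum>u\<in>V. \<Sum>v\<in>V. w u v * (\<bar>g u + g v\<bar> * (\<bar>g u\<bar> + \<bar>g v\<bar>))) / 2"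
    unfolding layer_sum_vol_minus_cut by (rule double_sum_cross_levels_le)
  also have "\<dots> = ?r * (\<Sum>u\<in>V. deg V w u * (g u)\<^sup>2)" using D by simp
  also have "\<dots> = (\<Sum>t\<in>levels g. level_gap g t * (?r * vol V w (pos_level g t \<union> neg_level g t)))"
    unfolding layer_sum_vol[symmetric] sum_distrib_left by (simp add: mult_ac)
  finally have "\<exists>t\<in>levels g. vol V w (pos_level g t \<union> neg_level g t)
      - 2 * cut_weight w (pos_level g t) (neg_level g t) \<le> ?r * vol V w (pos_level g t \<union> neg_level g t)"
    using level_gap_pos by (intro exists_le_of_weighted_sum_le[OF finite_levels ne, where \<delta>="level_gap g"]) auto
  then obtain t where t: "t \<in> levels g" and
    ineq: "vol V w (pos_level g t \<union> neg_level g t) - 2 * cut_weight w (pos_level g t) (neg_level g t)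
      \<le> ?r * vol V w (pos_level g t \<union> neg_level g t)" by blast
  obtain u where "u \<in> V" "g u \<noteq> 0" "t = (g u)\<^sup>2" using t unfolding levels_def by auto
  then have "u \<in> pos_level g t \<union> neg_level g t"
    unfolding pos_level_def neg_level_def by (auto simp: linorder_neq_iff)
  then have ne: "pos_level g t \<union> neg_level g t \<noteq> {}" by blast
  have sub: "pos_level g t \<subseteq> {u\<in>V. 0 < g u}" "neg_level g t \<subseteq> {u\<in>V. g u < 0}"
    unfolding pos_level_def neg_level_def by auto
  then have "1 - phibar V w (pos_level g t) (neg_level g t) \<le> ?r"
    using one_minus_phibar_le[OF _ ne ineq] by blast
  then show ?thesis using ne sub by blast
qed

end

lemma sub_bipartition_interleave:
  assumes "\<forall>i<k. A i \<subseteq> V \<and> B i \<subseteq> V \<and> A i \<inter> B i = {} \<and> A i \<union> B i \<noteq> {}"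
    and "disjoint_family_on (\<lambda>i. A i \<union> B i) {..<k}"
  shows "sub_bipartition V k (\<lambda>n. if even n then A (n div 2) else B (n div 2))"
  unfolding sub_bipartition_def
proof (intro conjI allI impI)
  fix n n' assume n: "n < 2 * k" and n': "n' < 2 * k" and "n \<noteq> n'"
  show "(if even n then A (n div 2) else B (n div 2)) \<inter> (if even n' then A (n' div 2) else B (n' div 2)) = {}"
  proof (cases "n div 2 = n' div 2")
    case True
    have "n' div 2 < k" using n' by simp
    then have "A (n' div 2) \<inter> B (n' div 2) = {}" using assms(1) by blast
    moreover have "even n \<noteq> even n'" using True \<open>n \<noteq> n'\<close> by (metis div_mult_mod_eq mod2_eq_if)
    ultimately show ?thesis using True by (cases "even n") auto
  next
    case False
    then have "(A (n div 2) \<union> B (n div 2)) \<inter> (A (n' div 2) \<union> B (n' div 2)) = {}"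
      using assms(2) n n' unfolding disjoint_family_on_def by auto
    then show ?thesis by auto
  qed
qed (use assms(1) in auto)

locale orthonormal_embedding = finite_weighted_graph +
  fixes k :: nat and f :: "nat \<Rightarrow> nat \<Rightarrow> real"
  assumes orthonormal: "\<forall>i<k. \<forall>j<k. ip_mu V w (f i) (f j) = (if i = j then 1 else 0)"
    and k_pos: "0 < k"
begin

definition F :: "nat \<Rightarrow> nat \<Rightarrow> real" where
  "F u = (\<lambda>i. f i u)"

definition normF :: "nat \<Rightarrow> real" where
  "normF u = vnorm k (F u)"

definition dir :: "nat \<Rightarrow> nat \<Rightarrow> real" where
  "dir u = (\<lambda>i. f i u / normF u)"

definition supp :: "nat set" where
  "supp = {u\<in>V. normF u \<noteq> 0}"

lemma normF_nonneg: "0 \<le> normF u"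
  unfolding normF_def by (rule vnorm_nonneg)

lemma normF_power2: "(normF u)\<^sup>2 = (\<Sum>i<k. (f i u)\<^sup>2)"
  unfolding normF_def vnorm_power2 F_def by simp

lemma finite_supp: "finite supp"
  unfolding supp_def using finite_V by simp

lemma supp_subset: "supp \<subseteq> V"
  unfolding supp_def by auto

lemma f_eq_normF_dir: "u \<in> supp \<Longrightarrow> f i u = normF u * dir u i"
  unfolding dir_def supp_def by auto

lemma vnorm_dir: "u \<in> supp \<Longrightarrow> vnorm k (dir u) = 1"
  unfolding dir_def supp_def normF_def using vnorm_normalize[of k "F u"] by (auto simp: F_def)

lemma f_eq_0_outside_supp: "u \<in> V \<Longrightarrow> u \<notin> supp \<Longrightarrow> i < k \<Longrightarrow> f i u = 0"
  using normF_power2[of u] by (simp add: supp_def sum_nonneg_eq_0_iff)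

lemma sum_deg_vinner_power2: "(\<Sum>u\<in>V. deg V w u * (vinner k (F u) y)\<^sup>2) = (vnorm k y)\<^sup>2"
proof -
  have "(\<Sum>u\<in>V. deg V w u * (vinner k (F u) y)\<^sup>2)
      = (\<Sum>i<k. \<Sum>j<k. y i * y j * (\<Sum>u\<in>V. deg V w u * f i u * f j u))"
    unfolding vinner_def F_def power2_eq_square sum_product
    by (simp add: sum_distrib_left sum.swap[of _ V] mult_ac)
  also have "\<dots> = (\<Sum>i<k. \<Sum>j<k. y i * y j * (if i = j then 1 else 0))"
    using orthonormal unfolding ip_mu_def by (intro sum.cong refl) auto
  also have "\<dots> = (vnorm k y)\<^sup>2"
    unfolding vnorm_power2 by (simp add: power2_eq_square if_distrib cong: if_cong)
  finally show ?thesis .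
qed

lemma sum_deg_normF_power2: "(\<Sum>u\<in>V. deg V w u * (normF u)\<^sup>2) = real k"
proof -
  have "(\<Sum>u\<in>V. deg V w u * (normF u)\<^sup>2) = (\<Sum>i<k. ip_mu V w (f i) (f i))"
    unfolding normF_power2 ip_mu_def
    by (simp add: sum_distrib_left sum.swap[of _ V] power2_eq_square mult_ac)
  also have "\<dots> = real k" using orthonormal by simp
  finally show ?thesis .
qed

lemma rayleigh_bar_eq:
  "rayleigh_bar V w k f = (\<Sum>u\<in>V. \<Sum>v\<in>V. w u v * (vnorm k (\<lambda>i. f i u + f i v))\<^sup>2) / (2 * real k)"
  using sum_deg_normF_power2 unfolding rayleigh_bar_def normF_power2 vnorm_power2
  by (simp add: mult.commute)

section \<open>Pairing up antipodal cells of a shifted grid\<close>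

text \<open>
  The grid of side \<open>side\<close> shifted by \<open>\<sigma>\<close> puts \<open>dir u\<close> into a cell; \<open>cell_class\<close> identifies the
  cell of \<open>y\<close> with the cell of \<open>-y\<close>, and \<open>orient\<close> flips \<open>dir u\<close> so that all vertices of
  a class land in the one cell that \<open>SOME\<close> picks from the class.\<close>

definition side :: real where
  "side = 1 / (2 * real k)"

definition cell :: "(nat \<Rightarrow> real) \<Rightarrow> (nat \<Rightarrow> real) \<Rightarrow> nat \<Rightarrow> int" where
  "cell \<sigma> y = (\<lambda>j. if j < k then \<lfloor>(y j - \<sigma> j) / side\<rfloor> else 0)"

definition cell_pair :: "(nat \<Rightarrow> real) \<Rightarrow> (nat \<Rightarrow> real) \<Rightarrow> (nat \<Rightarrow> int) \<times> (nat \<Rightarrow> int)" where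
  "cell_pair \<sigma> y = (cell \<sigma> y, cell \<sigma> (\<lambda>j. - y j))"

definition cell_class :: "(nat \<Rightarrow> real) \<Rightarrow> nat \<Rightarrow> ((nat \<Rightarrow> int) \<times> (nat \<Rightarrow> int)) set" where
  "cell_class \<sigma> u = {cell_pair \<sigma> (dir u), prod.swap (cell_pair \<sigma> (dir u))}"

definition orient :: "(nat \<Rightarrow> real) \<Rightarrow> nat \<Rightarrow> real" where
  "orient \<sigma> u = (if cell_pair \<sigma> (dir u) = (SOME z. z \<in> cell_class \<sigma> u) then 1 else -1)"

definition aligned :: "(nat \<Rightarrow> real) \<Rightarrow> nat \<Rightarrow> nat \<Rightarrow> real" where
  "aligned \<sigma> u = (\<lambda>j. orient \<sigma> u * dir u j)"

lemma side_pos: "0 < side"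
  unfolding side_def using k_pos by simp

lemma abs_orient: "\<bar>orient \<sigma> u\<bar> = 1"
  unfolding orient_def by simp

lemma orient_mult_self: "orient \<sigma> u * orient \<sigma> u = 1"
  unfolding orient_def by simp

lemma cell_pair_aligned: "cell_pair \<sigma> (aligned \<sigma> u) = (SOME z. z \<in> cell_class \<sigma> u)"
proof -
  have rep: "(SOME z. z \<in> cell_class \<sigma> u) \<in> cell_class \<sigma> u"
    unfolding cell_class_def by (rule someI) blast
  show ?thesis
  proof (cases "cell_pair \<sigma> (dir u) = (SOME z. z \<in> cell_class \<sigma> u)")
    case False
    then have "(SOME z. z \<in> cell_class \<sigma> u) = prod.swap (cell_pair \<sigma> (dir u))"
      using rep unfolding cell_class_def by auto
    moreover have "aligned \<sigma> u = (\<lambda>j. - dir u j)" unfolding aligned_def orient_def using False by simp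
    ultimately show ?thesis unfolding cell_pair_def by simp
  qed (simp add: aligned_def orient_def)
qed

lemma cell_aligned_eq: "cell_class \<sigma> u = cell_class \<sigma> v \<Longrightarrow> cell \<sigma> (aligned \<sigma> u) = cell \<sigma> (aligned \<sigma> v)"
  using cell_pair_aligned[of \<sigma> u] cell_pair_aligned[of \<sigma> v] unfolding cell_pair_def by (metis prod.inject)

lemma abs_diff_lt_side_of_floor_eq:
  assumes "\<lfloor>(a - c) / side\<rfloor> = \<lfloor>(b - c) / side\<rfloor>"
  shows "\<bar>a - b\<bar> < side"
proof -
  have "\<bar>(a - c) / side - (b - c) / side\<bar> < 1" using assms by linarith
  then have "\<bar>(a - b) / side\<bar> < 1" by (simp add: diff_divide_distrib)
  then show ?thesis using side_pos by (simp add: abs_divide divide_less_eq)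
qed

lemma vnorm_diff_power2_le_of_cell_eq:
  assumes "cell \<sigma> a = cell \<sigma> b"
  shows "(vnorm k (\<lambda>j. a j - b j))\<^sup>2 \<le> 1 / (4 * real k)"
proof -
  have "(a j - b j)\<^sup>2 \<le> side\<^sup>2" if "j < k" for j
  proof -
    have "\<lfloor>(a j - \<sigma> j) / side\<rfloor> = \<lfloor>(b j - \<sigma> j) / side\<rfloor>"
      using fun_cong[OF assms, of j] that unfolding cell_def by simp
    then show ?thesis using abs_diff_lt_side_of_floor_eq side_pos
      by (metis abs_le_square_iff abs_of_pos less_imp_le)
  qed
  then have "(\<Sum>j<k. (a j - b j)\<^sup>2) \<le> real k * side\<^sup>2"
    using sum_mono[of "{..<k}" "\<lambda>j. (a j - b j)\<^sup>2" "\<lambda>_. side\<^sup>2"] by simp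
  also have "\<dots> = 1 / (4 * real k)"
    unfolding side_def using k_pos by (simp add: power2_eq_square field_simps)
  finally show ?thesis unfolding vnorm_power2 .
qed

lemma vnorm_aligned: "u \<in> supp \<Longrightarrow> vnorm k (aligned \<sigma> u) = 1"
  unfolding aligned_def using vnorm_scale[of k "orient \<sigma> u" "dir u"] abs_orient vnorm_dir by simp

lemma vinner_aligned: "vinner k (aligned \<sigma> u) (aligned \<sigma> v) = orient \<sigma> u * orient \<sigma> v * vinner k (dir u) (dir v)"
  unfolding vinner_def aligned_def by (simp add: sum_distrib_left mult_ac)

lemma vinner_aligned_ge:
  assumes "u \<in> supp" "v \<in> supp" "cell_class \<sigma> u = cell_class \<sigma> v"
  shows "1 - 1 / (8 * real k) \<le> vinner k (aligned \<sigma> u) (aligned \<sigma> v)"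
  using vnorm_diff_power2_le_of_cell_eq[OF cell_aligned_eq[OF assms(3)]]
    vnorm_diff_power2[of k "aligned \<sigma> u" "aligned \<sigma> v"] vnorm_aligned[OF assms(1)] vnorm_aligned[OF assms(2)]
  by simp

text \<open>A class lies in a cap around \<open>\<plusminus>dir u0\<close>, so isotropy caps its mass near 1.\<close>

lemma class_mass_le:
  assumes u0: "u0 \<in> supp"
  shows "(\<Sum>v\<in>{v\<in>supp. cell_class \<sigma> v = cell_class \<sigma> u0}. deg V w v * (normF v)\<^sup>2) \<le> 1 + 1 / (2 * real k)"
proof -
  define t where "t = 1 / (8 * real k)"
  have t: "0 < t" "t \<le> 1/8" unfolding t_def using k_pos by auto
  define C where "C = {v\<in>supp. cell_class \<sigma> v = cell_class \<sigma> u0}"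
  have CV: "C \<subseteq> V" unfolding C_def using supp_subset by auto
  have each: "deg V w v * (normF v)\<^sup>2 * (1 - t)\<^sup>2 \<le> deg V w v * (vinner k (F v) (dir u0))\<^sup>2" if "v \<in> C" for v
  proof -
    have v: "v \<in> supp" "cell_class \<sigma> v = cell_class \<sigma> u0" using that unfolding C_def by auto
    have "vinner k (F v) (dir u0) = normF v * vinner k (dir v) (dir u0)"
      unfolding vinner_def F_def using f_eq_normF_dir[OF v(1)] by (simp add: sum_distrib_left mult_ac)
    moreover have "(vinner k (dir v) (dir u0))\<^sup>2 = (vinner k (aligned \<sigma> v) (aligned \<sigma> u0))\<^sup>2"
      unfolding vinner_aligned power2_eq_square using orient_mult_self[of \<sigma> v] orient_mult_self[of \<sigma> u0]
      by (simp add: mult_ac)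
    moreover have "(1 - t)\<^sup>2 \<le> (vinner k (aligned \<sigma> v) (aligned \<sigma> u0))\<^sup>2"
      using vinner_aligned_ge[OF v(1) u0 v(2)] t unfolding t_def by (intro power_mono) auto
    moreover have "0 \<le> deg V w v" using deg_pos v supp_subset by (auto intro: less_imp_le)
    ultimately show ?thesis by (simp add: power_mult_distrib mult_left_mono mult.assoc)
  qed
  have "(\<Sum>v\<in>C. deg V w v * (normF v)\<^sup>2) * (1 - t)\<^sup>2 \<le> (\<Sum>v\<in>C. deg V w v * (vinner k (F v) (dir u0))\<^sup>2)"
    using each by (simp add: sum_distrib_right sum_mono)
  also have "\<dots> \<le> (\<Sum>v\<in>V. deg V w v * (vinner k (F v) (dir u0))\<^sup>2)"
    using CV finite_V deg_pos by (intro sum_mono2) (auto intro!: mult_nonneg_nonneg simp: less_imp_le)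
  also have "\<dots> = 1" using sum_deg_vinner_power2 vnorm_dir[OF u0] by simp
  finally have "(\<Sum>v\<in>C. deg V w v * (normF v)\<^sup>2) * (1 - t)\<^sup>2 \<le> 1" .
  moreover have "1 \<le> (1 - t)\<^sup>2 * (1 + 4 * t)"
  proof -
    have "(1 - t)\<^sup>2 * (1 + 4 * t) = 1 + t * (2 - 7 * t + 4 * t\<^sup>2)" by (simp add: power2_eq_square algebra_simps)
    moreover have "0 \<le> t * (2 - 7 * t + 4 * t\<^sup>2)" using t by (intro mult_nonneg_nonneg) auto
    ultimately show ?thesis by simp
  qed
  ultimately have "(\<Sum>v\<in>C. deg V w v * (normF v)\<^sup>2) * (1 - t)\<^sup>2 \<le> (1 + 4 * t) * (1 - t)\<^sup>2"
    by (simp only: mult.commute[of "1 + 4 * t"])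
  then have "(\<Sum>v\<in>C. deg V w v * (normF v)\<^sup>2) \<le> 1 + 4 * t"
    using t by (simp add: mult_le_cancel_right)
  then show ?thesis unfolding C_def t_def using k_pos by simp
qed

definition mass :: "nat \<Rightarrow> real" where
  "mass u = deg V w u * (normF u)\<^sup>2"

definition class_weight :: "(nat \<Rightarrow> real) \<Rightarrow> ((nat \<Rightarrow> int) \<times> (nat \<Rightarrow> int)) set \<Rightarrow> real" where
  "class_weight \<sigma> K = (\<Sum>u\<in>{u\<in>supp. cell_class \<sigma> u = K}. mass u)"

lemma mass_nonneg: "u \<in> V \<Longrightarrow> 0 \<le> mass u"
  unfolding mass_def using deg_pos[of u] by simp

lemma sum_class_weight: "(\<Sum>K\<in>cell_class \<sigma> ` supp. class_weight \<sigma> K) = real k"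
proof -
  have "(\<Sum>K\<in>cell_class \<sigma> ` supp. class_weight \<sigma> K) = (\<Sum>u\<in>supp. mass u)"
    unfolding class_weight_def using finite_supp by (intro sum.group) auto
  also have "\<dots> = (\<Sum>u\<in>V. mass u)"
    using supp_subset finite_V by (intro sum.mono_neutral_left) (auto simp: mass_def supp_def)
  finally show ?thesis using sum_deg_normF_power2 unfolding mass_def by simp
qed

lemma class_weight_bounds:
  assumes "K \<in> cell_class \<sigma> ` supp"
  shows "0 \<le> class_weight \<sigma> K \<and> class_weight \<sigma> K \<le> 1 + 1 / (2 * real k)"
proof -
  obtain u0 where u0: "u0 \<in> supp" "K = cell_class \<sigma> u0" using assms by auto
  have "0 \<le> class_weight \<sigma> K"
    unfolding class_weight_def using supp_subset mass_nonneg by (intro sum_nonneg) auto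
  then show ?thesis unfolding class_weight_def mass_def u0(2) using class_mass_le[OF u0(1)] by simp
qed

lemma exists_heavy_class_groups:
  "\<exists>Y. (\<forall>i<k. Y i \<subseteq> cell_class \<sigma> ` supp \<and> 1/2 \<le> (\<Sum>K\<in>Y i. class_weight \<sigma> K))
     \<and> disjoint_family_on Y {..<k}"
proof -
  define M where "M = 1 + 1 / (2 * real k)"
  have "real (k - 1) * M + 1/2 = real k - 1/2 + (real k - 1) / (2 * real k)"
    unfolding M_def using k_pos by (simp add: of_nat_diff algebra_simps add_divide_distrib)
  also have "\<dots> \<le> real k" using k_pos by (simp add: field_simps)
  finally have "real (k - 1) * M + 1/2 \<le> (\<Sum>K\<in>cell_class \<sigma> ` supp. class_weight \<sigma> K)"
    unfolding sum_class_weight .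
  then obtain Y where "\<forall>i\<le>k - 1. Y i \<subseteq> cell_class \<sigma> ` supp \<and> 1/2 \<le> sum (class_weight \<sigma>) (Y i)"
      "disjoint_family_on Y {..k - 1}"
    using exists_disjoint_heavy_subsets[of "cell_class \<sigma> ` supp" "class_weight \<sigma>" M "k - 1"]
      finite_supp class_weight_bounds unfolding M_def by auto
  moreover have "{..k - 1} = {..<k}" using k_pos by auto
  ultimately show ?thesis by (auto simp: Suc_le_eq)
qed

definition test :: "(nat \<Rightarrow> real) \<Rightarrow> ((nat \<Rightarrow> int) \<times> (nat \<Rightarrow> int)) set set \<Rightarrow> nat \<Rightarrow> real" where
  "test \<sigma> Y u = (if u \<in> supp \<and> cell_class \<sigma> u \<in> Y then orient \<sigma> u * normF u else 0)"

definition pair_norm :: "nat \<Rightarrow> nat \<Rightarrow> real" where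
  "pair_norm u v = vnorm k (\<lambda>i. f i u + f i v)"

definition sep_weight :: "(nat \<Rightarrow> real) \<Rightarrow> nat \<Rightarrow> nat \<Rightarrow> real" where
  "sep_weight \<sigma> u v =
    (if u \<in> supp \<and> v \<in> supp \<and> cell_class \<sigma> u \<noteq> cell_class \<sigma> v then (normF u)\<^sup>2 + (normF v)\<^sup>2 else 0)"

lemma abs_test_le: "\<bar>test \<sigma> Y u\<bar> \<le> normF u"
  unfolding test_def using abs_orient[of \<sigma> u] normF_nonneg[of u] by (auto simp: abs_mult)

lemma test_energy:
  assumes "Y \<subseteq> cell_class \<sigma> ` supp"
  shows "(\<Sum>u\<in>V. deg V w u * (test \<sigma> Y u)\<^sup>2) = (\<Sum>K\<in>Y. class_weight \<sigma> K)"
proof -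
  have "(\<Sum>u\<in>V. deg V w u * (test \<sigma> Y u)\<^sup>2) = (\<Sum>u\<in>{u\<in>supp. cell_class \<sigma> u \<in> Y}. mass u)"
  proof -
    have "(\<Sum>u\<in>V. deg V w u * (test \<sigma> Y u)\<^sup>2) = (\<Sum>u\<in>{u\<in>supp. cell_class \<sigma> u \<in> Y}. deg V w u * (test \<sigma> Y u)\<^sup>2)"
      using finite_V supp_subset by (intro sum.mono_neutral_right) (auto simp: test_def)
    also have "\<dots> = (\<Sum>u\<in>{u\<in>supp. cell_class \<sigma> u \<in> Y}. mass u)"
      unfolding mass_def test_def by (intro sum.cong refl) (simp add: power_mult_distrib power2_eq_square orient_mult_self)
    finally show ?thesis .
  qed
  also have "\<dots> = (\<Sum>K\<in>Y. class_weight \<sigma> K)"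
    unfolding class_weight_def using finite_supp assms finite_surj[of supp Y "cell_class \<sigma>"]
    by (subst sum.group[symmetric, where g="cell_class \<sigma>"]) (auto intro!: sum.cong)
  finally show ?thesis .
qed

lemma abs_test_sum_le_same_class:
  assumes u: "u \<in> supp" and v: "v \<in> supp" and uv: "cell_class \<sigma> u = cell_class \<sigma> v"
  shows "\<bar>orient \<sigma> u * normF u + orient \<sigma> v * normF v\<bar> \<le> 2 * pair_norm u v"
proof (cases "orient \<sigma> u = orient \<sigma> v")
  case True
  \<comment> \<open>Equal orientations: \<open>dir u\<close> and \<open>dir v\<close> make an acute angle, so \<open>normF u + normF v \<le> 2 * pair_norm u v\<close>.\<close>
  have "1 / (8 * real k) \<le> 1" using k_pos by simp
  then have "0 \<le> vinner k (aligned \<sigma> u) (aligned \<sigma> v)"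
    using vinner_aligned_ge[OF u v uv] by linarith
  then have "0 \<le> vinner k (dir u) (dir v)"
    unfolding vinner_aligned True using orient_mult_self[of \<sigma> v] by (simp add: mult.assoc)
  moreover have "vinner k (F u) (F v) = normF u * normF v * vinner k (dir u) (dir v)"
    unfolding vinner_def F_def using f_eq_normF_dir[OF u] f_eq_normF_dir[OF v]
    by (simp add: sum_distrib_left mult_ac)
  ultimately have "0 \<le> vinner k (F u) (F v)" using normF_nonneg by simp
  then have "(normF u)\<^sup>2 + (normF v)\<^sup>2 \<le> (pair_norm u v)\<^sup>2"
    using vnorm_add_power2[of k "F u" "F v"] unfolding pair_norm_def normF_def F_def by simp
  then have "2 * ((normF u)\<^sup>2 + (normF v)\<^sup>2) \<le> 2 * (pair_norm u v)\<^sup>2" by simp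
  with square_sum_le_twice_sum_squares have "(normF u + normF v)\<^sup>2 \<le> 2 * (pair_norm u v)\<^sup>2"
    by (rule order_trans)
  also have "\<dots> \<le> (2 * pair_norm u v)\<^sup>2" by (simp add: power_mult_distrib)
  finally have "normF u + normF v \<le> 2 * pair_norm u v"
    by (rule power2_le_imp_le) (simp add: pair_norm_def vnorm_nonneg)
  moreover have "\<bar>orient \<sigma> u * normF u + orient \<sigma> v * normF v\<bar> = normF u + normF v"
  proof -
    have "orient \<sigma> u * normF u + orient \<sigma> v * normF v = orient \<sigma> v * (normF u + normF v)"
      using True by (simp add: distrib_left)
    then show ?thesis using abs_orient[of \<sigma> v] normF_nonneg[of u] normF_nonneg[of v] by (simp add: abs_mult)
  qed
  ultimately show ?thesis by simp
next
  case False
  then have "orient \<sigma> u = - orient \<sigma> v" unfolding orient_def by (auto split: if_splits)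
  then have "orient \<sigma> u * normF u + orient \<sigma> v * normF v = orient \<sigma> v * (normF v - normF u)"
    by (simp add: algebra_simps)
  then have "\<bar>orient \<sigma> u * normF u + orient \<sigma> v * normF v\<bar> = \<bar>normF u - normF v\<bar>"
    using abs_orient[of \<sigma> v] by (simp add: abs_mult abs_minus_commute)
  also have "\<dots> \<le> pair_norm u v"
    unfolding pair_norm_def normF_def using abs_vnorm_diff_le[of k "F u" "F v"] by (simp add: F_def)
  also have "\<dots> \<le> 2 * pair_norm u v" using vnorm_nonneg unfolding pair_norm_def by simp
  finally show ?thesis .
qed

lemma pair_norm_outside_supp: "u \<in> V \<Longrightarrow> u \<notin> supp \<Longrightarrow> pair_norm u v = normF v"
  unfolding pair_norm_def normF_def vnorm_def F_def using f_eq_0_outside_supp by (intro L2_set_cong) auto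

lemma test_pair_bound_outside_supp:
  assumes "u \<in> V" "u \<notin> supp"
  shows "\<bar>test \<sigma> Y u + test \<sigma> Y v\<bar> * (\<bar>test \<sigma> Y u\<bar> + \<bar>test \<sigma> Y v\<bar>) \<le> pair_norm u v * (normF u + normF v)"
proof -
  have "test \<sigma> Y u = 0" "normF u = 0" using assms unfolding test_def supp_def by auto
  moreover have "\<bar>test \<sigma> Y v\<bar> * \<bar>test \<sigma> Y v\<bar> \<le> normF v * normF v"
    using abs_test_le normF_nonneg by (intro mult_mono) auto
  ultimately show ?thesis using pair_norm_outside_supp[OF assms] by simp
qed

lemma test_pair_bound:
  assumes u: "u \<in> V" and v: "v \<in> V"
  shows "\<bar>test \<sigma> Y u + test \<sigma> Y v\<bar> * (\<bar>test \<sigma> Y u\<bar> + \<bar>test \<sigma> Y v\<bar>)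
      \<le> 2 * (pair_norm u v * (normF u + normF v)) + 2 * sep_weight \<sigma> u v"
proof -
  have energy_nonneg: "0 \<le> pair_norm u v * (normF u + normF v)"
    using vnorm_nonneg normF_nonneg unfolding pair_norm_def by simp
  have sep_nonneg: "0 \<le> sep_weight \<sigma> u v" unfolding sep_weight_def by simp
  consider "u \<notin> supp" | "v \<notin> supp" | "u \<in> supp" "v \<in> supp" "cell_class \<sigma> u \<noteq> cell_class \<sigma> v"
    | "u \<in> supp" "v \<in> supp" "cell_class \<sigma> u = cell_class \<sigma> v" by blast
  then show ?thesis
  proof cases
    case 1
    then show ?thesis using test_pair_bound_outside_supp[OF u 1, of \<sigma> Y v] energy_nonneg sep_nonneg
      by linarith
  next
    case 2
    then show ?thesis using test_pair_bound_outside_supp[OF v, of \<sigma> Y u] energy_nonneg sep_nonneg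
      by (simp add: pair_norm_def add.commute)
  next
    case 3
    then show ?thesis
      using abs_sum_mult_sum_abs_le[OF abs_test_le abs_test_le] energy_nonneg unfolding sep_weight_def
      by (smt (verit))
  next
    case 4
    show ?thesis
    proof (cases "cell_class \<sigma> u \<in> Y")
      case True
      then have "\<bar>test \<sigma> Y u + test \<sigma> Y v\<bar> \<le> 2 * pair_norm u v"
        using 4 abs_test_sum_le_same_class[OF 4] unfolding test_def by simp
      moreover have "\<bar>test \<sigma> Y u\<bar> + \<bar>test \<sigma> Y v\<bar> \<le> normF u + normF v" using abs_test_le add_mono by blast
      ultimately have "\<bar>test \<sigma> Y u + test \<sigma> Y v\<bar> * (\<bar>test \<sigma> Y u\<bar> + \<bar>test \<sigma> Y v\<bar>)
          \<le> 2 * pair_norm u v * (normF u + normF v)"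
        by (intro mult_mono) auto
      then show ?thesis using sep_nonneg by simp
    qed (use 4 energy_nonneg sep_nonneg in \<open>simp add: test_def\<close>)
  qed
qed

definition pair_energy :: real where
  "pair_energy = (\<Sum>u\<in>V. \<Sum>v\<in>V. w u v * (pair_norm u v * (normF u + normF v)))"

definition sep_energy :: "(nat \<Rightarrow> real) \<Rightarrow> real" where
  "sep_energy \<sigma> = (\<Sum>u\<in>V. \<Sum>v\<in>V. w u v * sep_weight \<sigma> u v)"

lemma double_sum_test_le:
  "(\<Sum>u\<in>V. \<Sum>v\<in>V. w u v * (\<bar>test \<sigma> Y u + test \<sigma> Y v\<bar> * (\<bar>test \<sigma> Y u\<bar> + \<bar>test \<sigma> Y v\<bar>)))
    \<le> 2 * pair_energy + 2 * sep_energy \<sigma>"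
proof -
  have "(\<Sum>u\<in>V. \<Sum>v\<in>V. w u v * (\<bar>test \<sigma> Y u + test \<sigma> Y v\<bar> * (\<bar>test \<sigma> Y u\<bar> + \<bar>test \<sigma> Y v\<bar>)))
      \<le> (\<Sum>u\<in>V. \<Sum>v\<in>V. w u v * (2 * (pair_norm u v * (normF u + normF v)) + 2 * sep_weight \<sigma> u v))"
    using w_nonneg test_pair_bound by (intro sum_mono mult_left_mono) auto
  also have "\<dots> = 2 * pair_energy + 2 * sep_energy \<sigma>"
    unfolding pair_energy_def sep_energy_def by (simp add: sum.distrib sum_distrib_left algebra_simps)
  finally show ?thesis .
qed

lemma pair_energy_nonneg: "0 \<le> pair_energy"
  unfolding pair_energy_def pair_norm_def using w_nonneg vnorm_nonneg normF_nonneg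
  by (intro sum_nonneg mult_nonneg_nonneg add_nonneg_nonneg) auto

lemma rayleigh_bar_nonneg: "0 \<le> rayleigh_bar V w k f"
  unfolding rayleigh_bar_eq using w_nonneg by (intro divide_nonneg_nonneg sum_nonneg mult_nonneg_nonneg) auto

lemma pair_energy_power2_le: "pair_energy\<^sup>2 \<le> 8 * (real k)\<^sup>2 * rayleigh_bar V w k f"
proof -
  have "(\<Sum>u\<in>V. \<Sum>v\<in>V. w u v * (normF u + normF v)\<^sup>2)
      \<le> (\<Sum>u\<in>V. \<Sum>v\<in>V. 2 * (w u v * (normF u)\<^sup>2) + 2 * (w u v * (normF v)\<^sup>2))"
  proof (intro sum_mono)
    fix u v assume "u \<in> V" "v \<in> V"
    then have "w u v * (normF u + normF v)\<^sup>2 \<le> w u v * (2 * ((normF u)\<^sup>2 + (normF v)\<^sup>2))"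
      using w_nonneg square_sum_le_twice_sum_squares by (intro mult_left_mono) auto
    then show "w u v * (normF u + normF v)\<^sup>2 \<le> 2 * (w u v * (normF u)\<^sup>2) + 2 * (w u v * (normF v)\<^sup>2)"
      by (simp add: algebra_simps)
  qed
  also have "\<dots> = 4 * (\<Sum>u\<in>V. \<Sum>v\<in>V. w u v * (normF u)\<^sup>2)"
    using double_sum_swap[of "\<lambda>u v. (normF u)\<^sup>2"] by (simp add: sum.distrib flip: sum_distrib_left)
  also have "\<dots> = 4 * real k" by (simp add: double_sum_eq_sum_deg sum_deg_normF_power2)
  finally have second: "(\<Sum>u\<in>V. \<Sum>v\<in>V. w u v * (normF u + normF v)\<^sup>2) \<le> 4 * real k" .
  have first: "(\<Sum>u\<in>V. \<Sum>v\<in>V. w u v * (pair_norm u v)\<^sup>2) = 2 * real k * rayleigh_bar V w k f"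
    using k_pos unfolding rayleigh_bar_eq pair_norm_def by simp
  have "pair_energy\<^sup>2 \<le> (\<Sum>u\<in>V. \<Sum>v\<in>V. w u v * (pair_norm u v)\<^sup>2) * (\<Sum>u\<in>V. \<Sum>v\<in>V. w u v * (normF u + normF v)\<^sup>2)"
    unfolding pair_energy_def using double_sum_Cauchy_Schwarz[of pair_norm "\<lambda>u v. normF u + normF v"]
    by (simp add: mult.assoc)
  also have "\<dots> \<le> 2 * real k * rayleigh_bar V w k f * (4 * real k)"
    unfolding first using second rayleigh_bar_nonneg by (intro mult_left_mono) auto
  finally show ?thesis by (simp add: power2_eq_square mult_ac)
qed

section \<open>Choosing the grid shift\<close>

definition crosses :: "real \<Rightarrow> real \<Rightarrow> real \<Rightarrow> real" where
  "crosses t a b = of_bool (\<lfloor>(a - t) / side\<rfloor> \<noteq> \<lfloor>(b - t) / side\<rfloor>)"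

definition crossings :: "(nat \<Rightarrow> real) \<Rightarrow> nat \<Rightarrow> nat \<Rightarrow> real" where
  "crossings \<sigma> u v = (\<Sum>j<k. crosses (\<sigma> j) (dir u j) (- dir v j) + crosses (\<sigma> j) (- dir u j) (dir v j))"

lemma crossings_nonneg: "0 \<le> crossings \<sigma> u v"
  unfolding crossings_def crosses_def by (intro sum_nonneg) auto

lemma one_le_crossings:
  assumes "cell_class \<sigma> u \<noteq> cell_class \<sigma> v"
  shows "1 \<le> crossings \<sigma> u v"
proof -
  obtain j where j: "j < k" and
    "crosses (\<sigma> j) (dir u j) (- dir v j) + crosses (\<sigma> j) (- dir u j) (dir v j) \<noteq> 0"
  proof (rule ccontr)
    assume "\<not> thesis"
    then have "cell \<sigma> (dir u) = cell \<sigma> (\<lambda>j. - dir v j)" "cell \<sigma> (\<lambda>j. - dir u j) = cell \<sigma> (dir v)"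
      using that unfolding cell_def crosses_def by (auto simp: fun_eq_iff add_nonneg_eq_0_iff)
    then have "cell_class \<sigma> u = cell_class \<sigma> v" unfolding cell_class_def cell_pair_def by auto
    then show False using assms by simp
  qed
  then have "1 \<le> crosses (\<sigma> j) (dir u j) (- dir v j) + crosses (\<sigma> j) (- dir u j) (dir v j)"
    unfolding crosses_def by auto
  also have "\<dots> \<le> crossings \<sigma> u v"
    unfolding crossings_def using j by (intro member_le_sum) (auto simp: crosses_def)
  finally show ?thesis .
qed

lemma sep_weight_le_crossings:
  "sep_weight \<sigma> u v \<le> (if u \<in> supp \<and> v \<in> supp then ((normF u)\<^sup>2 + (normF v)\<^sup>2) * crossings \<sigma> u v else 0)"
proof (cases "cell_class \<sigma> u = cell_class \<sigma> v")
  case False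
  then have "((normF u)\<^sup>2 + (normF v)\<^sup>2) * 1 \<le> ((normF u)\<^sup>2 + (normF v)\<^sup>2) * crossings \<sigma> u v"
    using one_le_crossings by (intro mult_left_mono) auto
  then show ?thesis unfolding sep_weight_def using False by simp
qed (simp add: sep_weight_def crossings_nonneg)

definition sep_coeff :: "nat \<Rightarrow> nat \<Rightarrow> real" where
  "sep_coeff u v = w u v * ((normF u)\<^sup>2 + (normF v)\<^sup>2)"

lemma sep_coeff_nonneg: "u \<in> V \<Longrightarrow> v \<in> V \<Longrightarrow> 0 \<le> sep_coeff u v"
  unfolding sep_coeff_def using w_nonneg by simp

lemma sep_energy_le_crossings:
  "sep_energy \<sigma> \<le> (\<Sum>j<k. \<Sum>u\<in>supp. \<Sum>v\<in>supp.
      sep_coeff u v * (crosses (\<sigma> j) (dir u j) (- dir v j) + crosses (\<sigma> j) (- dir u j) (dir v j)))"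
proof -
  have "sep_energy \<sigma>
      \<le> (\<Sum>u\<in>V. \<Sum>v\<in>V. w u v * (if u \<in> supp \<and> v \<in> supp then ((normF u)\<^sup>2 + (normF v)\<^sup>2) * crossings \<sigma> u v else 0))"
    unfolding sep_energy_def using w_nonneg sep_weight_le_crossings by (intro sum_mono mult_left_mono) auto
  also have "\<dots> = (\<Sum>u\<in>supp. \<Sum>v\<in>V.
      w u v * (if u \<in> supp \<and> v \<in> supp then ((normF u)\<^sup>2 + (normF v)\<^sup>2) * crossings \<sigma> u v else 0))"
    using finite_V supp_subset by (intro sum.mono_neutral_right) auto
  also have "\<dots> = (\<Sum>u\<in>supp. \<Sum>v\<in>supp. sep_coeff u v * crossings \<sigma> u v)"
    using finite_V supp_subset unfolding sep_coeff_def
    by (intro sum.cong refl trans[OF sum.mono_neutral_right[of V supp]]) auto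
  also have "\<dots> = (\<Sum>j<k. \<Sum>u\<in>supp. \<Sum>v\<in>supp.
      sep_coeff u v * (crosses (\<sigma> j) (dir u j) (- dir v j) + crosses (\<sigma> j) (- dir u j) (dir v j)))"
    unfolding crossings_def sum_distrib_left by (simp add: sum.swap[of _ "{..<k}"])
  finally show ?thesis .
qed

lemma exists_good_shift:
  "\<exists>\<sigma>. \<forall>j. (\<Sum>u\<in>supp. \<Sum>v\<in>supp.
      sep_coeff u v * (crosses (\<sigma> j) (dir u j) (- dir v j) + crosses (\<sigma> j) (- dir u j) (dir v j)))
    \<le> 4 / side * (\<Sum>u\<in>supp. \<Sum>v\<in>supp. sep_coeff u v * \<bar>dir u j + dir v j\<bar>)"
proof -
  have "\<exists>t. (\<Sum>u\<in>supp. \<Sum>v\<in>supp. sep_coeff u v * (crosses t (dir u j) (- dir v j) + crosses t (- dir u j) (dir v j)))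
     \<le> 4 / side * (\<Sum>u\<in>supp. \<Sum>v\<in>supp. sep_coeff u v * \<bar>dir u j + dir v j\<bar>)" for j
  proof -
    \<comment> \<open>Both crossing terms of a pair are indexed by a Boolean, so that one shift handles them together.\<close>
    define a :: "(nat \<times> nat) \<times> bool \<Rightarrow> real" where "a q = (case q of ((u, v), b) \<Rightarrow> if b then dir u j else - dir u j)" for q
    define b :: "(nat \<times> nat) \<times> bool \<Rightarrow> real" where "b q = (case q of ((u, v), b) \<Rightarrow> if b then - dir v j else dir v j)" for q
    define c :: "(nat \<times> nat) \<times> bool \<Rightarrow> real" where "c q = (case q of ((u, v), _) \<Rightarrow> sep_coeff u v)" for q
    have split: "(\<Sum>q\<in>(supp \<times> supp) \<times> UNIV. h q) = (\<Sum>u\<in>supp. \<Sum>v\<in>supp. h ((u, v), True) + h ((u, v), False))"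
      for h :: "(nat \<times> nat) \<times> bool \<Rightarrow> real"
    proof -
      have "(\<Sum>q\<in>(supp \<times> supp) \<times> UNIV. h q) = (\<Sum>p\<in>supp \<times> supp. \<Sum>b\<in>UNIV. h (p, b))"
        unfolding sum.cartesian_product by simp
      then show ?thesis by (simp add: UNIV_bool add.commute sum.cartesian_product case_prod_beta)
    qed
    obtain t where "(\<Sum>q\<in>(supp \<times> supp) \<times> UNIV. c q * crosses t (a q) (b q))
        \<le> 2 / side * (\<Sum>q\<in>(supp \<times> supp) \<times> UNIV. c q * \<bar>a q - b q\<bar>)"
      using exists_shift_few_crossings[of "(supp \<times> supp) \<times> UNIV" c side a b] finite_supp supp_subset
        sep_coeff_nonneg side_pos
      unfolding crosses_def c_def by (auto simp: subset_iff)
    then show ?thesis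
      unfolding split unfolding a_def b_def c_def
      by (intro exI[of _ t]) (simp add: sum_distrib_left distrib_left abs_minus_commute[of "- dir u j" for u] add.commute)
  qed
  then show ?thesis by (rule choice[OF allI])
qed

lemma normF_power2_sum_mult_vnorm_dir_le:
  assumes u: "u \<in> supp" and v: "v \<in> supp"
  shows "((normF u)\<^sup>2 + (normF v)\<^sup>2) * vnorm k (\<lambda>j. dir u j + dir v j) \<le> 2 * pair_norm u v * (normF u + normF v)"
proof -
  have nonzero: "vnorm k (F u) \<noteq> 0" "vnorm k (F v) \<noteq> 0"
    using u v unfolding supp_def normF_def by auto
  have "vnorm k (\<lambda>j. dir u j + dir v j) * normF v \<le> 2 * pair_norm u v"
    using vnorm_normalized_sum_le[OF nonzero] unfolding dir_def pair_norm_def normF_def F_def .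
  moreover have "vnorm k (\<lambda>j. dir u j + dir v j) * normF u \<le> 2 * pair_norm u v"
    using vnorm_normalized_sum_le[OF nonzero(2,1)] unfolding dir_def pair_norm_def normF_def F_def
    by (simp add: add.commute)
  ultimately have "normF v * (vnorm k (\<lambda>j. dir u j + dir v j) * normF v) \<le> normF v * (2 * pair_norm u v)"
    "normF u * (vnorm k (\<lambda>j. dir u j + dir v j) * normF u) \<le> normF u * (2 * pair_norm u v)"
    using normF_nonneg by (simp_all add: mult_left_mono)
  then show ?thesis by (simp add: algebra_simps power2_eq_square)
qed

lemma sep_coeff_mult_sum_abs_dir_le:
  assumes "u \<in> supp" "v \<in> supp"
  shows "sep_coeff u v * (\<Sum>j<k. \<bar>dir u j + dir v j\<bar>)
      \<le> 2 * sqrt (real k) * (w u v * (pair_norm u v * (normF u + normF v)))"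
proof -
  have "sep_coeff u v * (\<Sum>j<k. \<bar>dir u j + dir v j\<bar>)
      \<le> sep_coeff u v * (sqrt (real k) * vnorm k (\<lambda>j. dir u j + dir v j))"
    using sep_coeff_nonneg assms supp_subset sum_abs_le_sqrt_vnorm by (intro mult_left_mono) auto
  also have "\<dots> = sqrt (real k) * w u v * (((normF u)\<^sup>2 + (normF v)\<^sup>2) * vnorm k (\<lambda>j. dir u j + dir v j))"
    unfolding sep_coeff_def by (simp add: mult_ac)
  also have "\<dots> \<le> sqrt (real k) * w u v * (2 * pair_norm u v * (normF u + normF v))"
    using normF_power2_sum_mult_vnorm_dir_le[OF assms] w_nonneg[of u v] assms supp_subset
    by (intro mult_left_mono mult_nonneg_nonneg) auto
  finally show ?thesis by (simp add: algebra_simps)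
qed

lemma exists_shift_sep_energy_le: "\<exists>\<sigma>. sep_energy \<sigma> \<le> 16 * real k * sqrt (real k) * pair_energy"
proof -
  obtain \<sigma> where \<sigma>: "\<forall>j. (\<Sum>u\<in>supp. \<Sum>v\<in>supp.
      sep_coeff u v * (crosses (\<sigma> j) (dir u j) (- dir v j) + crosses (\<sigma> j) (- dir u j) (dir v j)))
    \<le> 4 / side * (\<Sum>u\<in>supp. \<Sum>v\<in>supp. sep_coeff u v * \<bar>dir u j + dir v j\<bar>)"
    using exists_good_shift by blast
  have "sep_energy \<sigma> \<le> (\<Sum>j<k. 4 / side * (\<Sum>u\<in>supp. \<Sum>v\<in>supp. sep_coeff u v * \<bar>dir u j + dir v j\<bar>))"
    using sep_energy_le_crossings[of \<sigma>] \<sigma> by (meson order_trans sum_mono)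
  also have "\<dots> = 4 / side * (\<Sum>u\<in>supp. \<Sum>v\<in>supp. sep_coeff u v * (\<Sum>j<k. \<bar>dir u j + dir v j\<bar>))"
    by (simp add: sum_distrib_left sum.swap[of _ "{..<k}"])
  also have "\<dots> \<le> 4 / side * (\<Sum>u\<in>supp. \<Sum>v\<in>supp. 2 * sqrt (real k) * (w u v * (pair_norm u v * (normF u + normF v))))"
    using sep_coeff_mult_sum_abs_dir_le side_pos by (intro mult_left_mono sum_mono) auto
  also have "\<dots> = 8 * sqrt (real k) / side * (\<Sum>u\<in>supp. \<Sum>v\<in>supp. w u v * (pair_norm u v * (normF u + normF v)))"
    by (simp add: sum_distrib_left mult_ac)
  also have "\<dots> \<le> 8 * sqrt (real k) / side * pair_energy"
  proof -
    have nonneg: "0 \<le> w u v * (pair_norm u v * (normF u + normF v))" if "u \<in> V" "v \<in> V" for u v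
      unfolding pair_norm_def using w_nonneg[OF that] vnorm_nonneg normF_nonneg by simp
    have "(\<Sum>u\<in>supp. \<Sum>v\<in>supp. w u v * (pair_norm u v * (normF u + normF v)))
        \<le> (\<Sum>u\<in>supp. \<Sum>v\<in>V. w u v * (pair_norm u v * (normF u + normF v)))"
      using finite_V supp_subset nonneg by (intro sum_mono sum_mono2) auto
    also have "\<dots> \<le> pair_energy"
      unfolding pair_energy_def using finite_V supp_subset nonneg by (intro sum_mono2 sum_nonneg) auto
    finally show ?thesis using side_pos by (intro mult_left_mono) auto
  qed
  also have "\<dots> = 16 * real k * sqrt (real k) * pair_energy"
    unfolding side_def by simp
  finally show ?thesis by blast
qed

lemma one_minus_phibar_power2_le:
  assumes "0 \<le> \<beta>" "\<beta> \<le> N / (2 * D)" "1/2 \<le> D" "N \<le> 2 * pair_energy + 2 * sep_energy \<sigma>"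
    and "sep_energy \<sigma> \<le> 16 * real k * sqrt (real k) * pair_energy"
  shows "\<beta>\<^sup>2 \<le> 10000 * real k ^ 6 * rayleigh_bar V w k f"
proof -
  have k: "1 \<le> real k" "1 \<le> sqrt (real k)" using k_pos by auto
  have "0 \<le> N / (2 * D)" using assms(1,2) by linarith
  then have "0 \<le> N" using assms(3) by (simp add: zero_le_divide_iff)
  then have "N / (2 * D) \<le> N" using assms(3) by (simp add: divide_le_eq mult_le_cancel_left1)
  then have "\<beta> \<le> 2 * pair_energy + 32 * (real k * sqrt (real k)) * pair_energy"
    using assms(2,4,5) by simp
  also have "\<dots> \<le> 34 * (real k * sqrt (real k)) * pair_energy"
  proof -
    have "1 * pair_energy \<le> (real k * sqrt (real k)) * pair_energy"
      using mult_mono[OF k] pair_energy_nonneg by (intro mult_right_mono) auto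
    then show ?thesis by simp
  qed
  finally have "\<beta>\<^sup>2 \<le> (34 * (real k * sqrt (real k)) * pair_energy)\<^sup>2"
    using assms(1) by (intro power_mono) auto
  also have "\<dots> = 1156 * (real k * sqrt (real k))\<^sup>2 * pair_energy\<^sup>2"
    by (simp only: power_mult_distrib) simp
  also have "\<dots> = 1156 * real k ^ 3 * pair_energy\<^sup>2"
    by (simp add: power_mult_distrib power3_eq_cube power2_eq_square)
  also have "\<dots> \<le> 1156 * real k ^ 3 * (8 * (real k)\<^sup>2 * rayleigh_bar V w k f)"
    using pair_energy_power2_le by (intro mult_left_mono) auto
  also have "\<dots> = 9248 * real k ^ 5 * rayleigh_bar V w k f"
    using power_add[of "real k" 3 2] by simp
  also have "\<dots> \<le> 10000 * real k ^ 6 * rayleigh_bar V w k f"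
  proof -
    have "real k ^ 5 \<le> real k ^ 6" "0 \<le> real k ^ 5" using k by (auto intro: power_increasing)
    then have "9248 * real k ^ 5 \<le> 10000 * real k ^ 6" by linarith
    then show ?thesis using rayleigh_bar_nonneg by (rule mult_right_mono)
  qed
  finally show ?thesis .
qed

lemma exists_good_test_bipartition:
  assumes Y: "Y \<subseteq> cell_class \<sigma> ` supp" "1/2 \<le> (\<Sum>K\<in>Y. class_weight \<sigma> K)"
    and sep: "sep_energy \<sigma> \<le> 16 * real k * sqrt (real k) * pair_energy"
  shows "\<exists>A B. A \<subseteq> {u\<in>V. 0 < test \<sigma> Y u} \<and> B \<subseteq> {u\<in>V. test \<sigma> Y u < 0} \<and> A \<union> B \<noteq> {}
    \<and> (1 - phibar V w A B)\<^sup>2 / 2 \<le> 1 - sqrt (1 - (1 - phibar V w A B)\<^sup>2)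
    \<and> 1 - sqrt (1 - (1 - phibar V w A B)\<^sup>2) \<le> 10000 * real k ^ 6 * rayleigh_bar V w k f"
proof -
  have D: "1/2 \<le> (\<Sum>u\<in>V. deg V w u * (test \<sigma> Y u)\<^sup>2)" using Y test_energy by simp
  then have "0 < (\<Sum>u\<in>V. deg V w u * (test \<sigma> Y u)\<^sup>2)" by linarith
  from threshold_rounding[OF this] obtain A B where A: "A \<subseteq> {u\<in>V. 0 < test \<sigma> Y u}"
    and B: "B \<subseteq> {u\<in>V. test \<sigma> Y u < 0}" and ne: "A \<union> B \<noteq> {}" and
    \<beta>: "1 - phibar V w A B \<le> (\<Sum>u\<in>V. \<Sum>v\<in>V. w u v * (\<bar>test \<sigma> Y u + test \<sigma> Y v\<bar>
          * (\<bar>test \<sigma> Y u\<bar> + \<bar>test \<sigma> Y v\<bar>))) / (2 * (\<Sum>u\<in>V. deg V w u * (test \<sigma> Y u)\<^sup>2))"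
    by (elim exE conjE) (rule that)
  have "A \<subseteq> V" "B \<subseteq> V" "A \<inter> B = {}" using A B by force+
  then have "0 \<le> 1 - phibar V w A B" "1 - phibar V w A B \<le> 1" using phibar_bounds ne by auto
  note sqrt_bounds = one_minus_sqrt_bounds[OF this]
  have "(1 - phibar V w A B)\<^sup>2 \<le> 10000 * real k ^ 6 * rayleigh_bar V w k f"
    using \<open>0 \<le> 1 - phibar V w A B\<close> \<beta> D double_sum_test_le sep by (rule one_minus_phibar_power2_le)
  with sqrt_bounds(2) have "1 - sqrt (1 - (1 - phibar V w A B)\<^sup>2) \<le> 10000 * real k ^ 6 * rayleigh_bar V w k f"
    by (rule order_trans)
  with A B ne sqrt_bounds(1) show ?thesis by blast
qed

lemma test_nonzero_imp_class: "test \<sigma> Y u \<noteq> 0 \<Longrightarrow> cell_class \<sigma> u \<in> Y"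
  unfolding test_def by (auto split: if_splits)

lemma exists_good_sub_bipartition:
  "\<exists>S. sub_bipartition V k S \<and>
    (\<forall>i<k. (1 - phibar V w (S (2*i)) (S (2*i+1)))\<^sup>2 / 2
        \<le> 1 - sqrt (1 - (1 - phibar V w (S (2*i)) (S (2*i+1)))\<^sup>2)
      \<and> 1 - sqrt (1 - (1 - phibar V w (S (2*i)) (S (2*i+1)))\<^sup>2)
        \<le> 10000 * real k ^ 6 * rayleigh_bar V w k f)"
proof -
  obtain \<sigma> where sep: "sep_energy \<sigma> \<le> 16 * real k * sqrt (real k) * pair_energy"
    using exists_shift_sep_energy_le by blast
  obtain Y where Y: "\<forall>i<k. Y i \<subseteq> cell_class \<sigma> ` supp \<and> 1/2 \<le> (\<Sum>K\<in>Y i. class_weight \<sigma> K)"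
    and disj: "disjoint_family_on Y {..<k}"
    using exists_heavy_class_groups by blast
  define good where "good i A B \<longleftrightarrow> A \<subseteq> {u\<in>V. 0 < test \<sigma> (Y i) u} \<and> B \<subseteq> {u\<in>V. test \<sigma> (Y i) u < 0}
    \<and> A \<union> B \<noteq> {} \<and> (1 - phibar V w A B)\<^sup>2 / 2 \<le> 1 - sqrt (1 - (1 - phibar V w A B)\<^sup>2)
    \<and> 1 - sqrt (1 - (1 - phibar V w A B)\<^sup>2) \<le> 10000 * real k ^ 6 * rayleigh_bar V w k f" for i A B
  have "\<forall>i\<in>{..<k}. \<exists>AB. good i (fst AB) (snd AB)"
    using exists_good_test_bipartition Y sep unfolding good_def by fastforce
  then obtain AB where AB: "\<forall>i\<in>{..<k}. good i (fst (AB i)) (snd (AB i))" by (rule bchoice[THEN exE])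
  have "sub_bipartition V k (\<lambda>n. if even n then fst (AB (n div 2)) else snd (AB (n div 2)))"
  proof (rule sub_bipartition_interleave)
    show "\<forall>i<k. fst (AB i) \<subseteq> V \<and> snd (AB i) \<subseteq> V \<and> fst (AB i) \<inter> snd (AB i) = {}
        \<and> fst (AB i) \<union> snd (AB i) \<noteq> {}"
      using AB unfolding good_def by force
    have "fst (AB i) \<union> snd (AB i) \<subseteq> {u. test \<sigma> (Y i) u \<noteq> 0}" if "i < k" for i
      using AB that unfolding good_def by force
    then show "disjoint_family_on (\<lambda>i. fst (AB i) \<union> snd (AB i)) {..<k}"
      using disj test_nonzero_imp_class unfolding disjoint_family_on_def by blast
  qed
  then show ?thesis using AB unfolding good_def by (intro exI) auto
qed

end

theorem theorem6p1:
  shows "\<exists>C::real. C > 0 \<and>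
    (\<forall>(V::nat set) (w::nat \<Rightarrow> nat \<Rightarrow> real) (k::nat) (f::nat \<Rightarrow> nat \<Rightarrow> real).
      weighted_graph V w \<longrightarrow>
      (\<forall>i<k. \<forall>j<k. ip_mu V w (f i) (f j) = (if i = j then 1 else 0)) \<longrightarrow>
      (\<exists>S. sub_bipartition V k S \<and>
        (\<forall>i<k.
          (1 - phibar V w (S (2*i)) (S (2*i+1)))\<^sup>2 / 2
            \<le> 1 - sqrt (1 - (1 - phibar V w (S (2*i)) (S (2*i+1)))\<^sup>2)
          \<and> 1 - sqrt (1 - (1 - phibar V w (S (2*i)) (S (2*i+1)))\<^sup>2)
            \<le> C * real k ^ 6 * rayleigh_bar V w k f)))"
proof (intro exI[of _ "10000::real"] conjI allI impI, goal_cases)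
  case 1
  show ?case by simp
next
  case (2 V w k f)
  then consider "k = 0" | "orthonormal_embedding V w k f"
    unfolding orthonormal_embedding_def orthonormal_embedding_axioms_def finite_weighted_graph_def by auto
  then show ?case
  proof cases
    case 1
    then show ?thesis by (simp add: sub_bipartition_def)
  next
    case 2
    then show ?thesis by (rule orthonormal_embedding.exists_good_sub_bipartition)
  qed
qed

end
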